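(* Let $G$ be a connected $d$-regular simple graph with $d\ge 3$ which is not $K_4$, $K_5$, or $K_{3,3}$. Then \[ \mathscr{K}_e(G)>\mathscr{K}_{nb}(G). \]
   Context: Kemeny's constant of an irreducible finite Markov chain with transition matrix $P$ whose eigenvalues (with multiplicity) are $1=\rho_1,\rho_2,\dots,\rho_N$ (with $1$ simple) is $\mathscr{K}(P)=\sum_{i=2}^{N}\frac{1}{1-\rho_i}$. Arcs of $G$: for each edge $\{u,v\}$ the two ordered pairs $(u,v),(v,u)$. $\mathscr{K}_e(G)$ is Kemeny's constant of the chain on arcs where from $(u,v)$ one moves to $(v,w)$ with probability $1/\deg(v)$ for each neighbor $w$ of $v$. $\mathscr{K}_{nb}(G)$ is Kemeny's constant of the non-backtracking chain on arcs where from $(u,v)$ one moves to $(v,w)$ with probability $1/(\deg(v)-1)$ for each neighbor $w\neq u$ of $v$. *)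

theory Defs
  imports Jordan_Normal_Form.Char_Poly "HOL-Computational_Algebra.Polynomial" "HOL-Library.Product_Lexorder"
begin

text \<open>Kemeny's constant of a (complex) transition matrix P: the eigenvalues of P with
  multiplicity are the roots (with multiplicity) of its characteristic polynomial; one
  copy of the eigenvalue 1 is removed and the sum of 1/(1 - rho) over the rest is taken.\<close>
definition kemeny :: "complex mat \<Rightarrow> complex" where
  "kemeny P = sum_mset (image_mset (\<lambda>\<rho>. 1 / (1 - \<rho>)) (proots (char_poly P) - {#1#}))"

definition simple_graph :: "'a set \<Rightarrow> ('a \<Rightarrow> 'a \<Rightarrow> bool) \<Rightarrow> bool" where
  "simple_graph V E \<longleftrightarrow> finite V \<and> (\<forall>u v. E u v \<longrightarrow> u \<in> V \<and> v \<in> V)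
     \<and> (\<forall>u v. E u v \<longrightarrow> E v u) \<and> (\<forall>u. \<not> E u u)"

definition deg :: "'a set \<Rightarrow> ('a \<Rightarrow> 'a \<Rightarrow> bool) \<Rightarrow> 'a \<Rightarrow> nat" where
  "deg V E v = card {w \<in> V. E v w}"

definition regular :: "'a set \<Rightarrow> ('a \<Rightarrow> 'a \<Rightarrow> bool) \<Rightarrow> nat \<Rightarrow> bool" where
  "regular V E d \<longleftrightarrow> (\<forall>v\<in>V. deg V E v = d)"

definition connected_graph :: "'a set \<Rightarrow> ('a \<Rightarrow> 'a \<Rightarrow> bool) \<Rightarrow> bool" where
  "connected_graph V E \<longleftrightarrow> V \<noteq> {} \<and> (\<forall>u\<in>V. \<forall>v\<in>V. E\<^sup>*\<^sup>* u v)"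

definition graph_iso :: "'a set \<Rightarrow> ('a \<Rightarrow> 'a \<Rightarrow> bool) \<Rightarrow> 'b set \<Rightarrow> ('b \<Rightarrow> 'b \<Rightarrow> bool) \<Rightarrow> bool" where
  "graph_iso V E W F \<longleftrightarrow> (\<exists>f. bij_betw f V W \<and> (\<forall>u\<in>V. \<forall>v\<in>V. E u v \<longleftrightarrow> F (f u) (f v)))"

definition complete_V :: "nat \<Rightarrow> nat set" where "complete_V n = {0..<n}"
definition complete_E :: "nat \<Rightarrow> nat \<Rightarrow> nat \<Rightarrow> bool" where
  "complete_E n u v \<longleftrightarrow> u < n \<and> v < n \<and> u \<noteq> v"
definition K33_V :: "nat set" where "K33_V = {0..<6}"
definition K33_E :: "nat \<Rightarrow> nat \<Rightarrow> bool" where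
  "K33_E u v \<longleftrightarrow> u < 6 \<and> v < 6 \<and> ((u < 3) \<noteq> (v < 3))"

definition arcs :: "'a set \<Rightarrow> ('a \<Rightarrow> 'a \<Rightarrow> bool) \<Rightarrow> ('a \<times> 'a) set" where
  "arcs V E = {(u, v). u \<in> V \<and> v \<in> V \<and> E u v}"

definition arc_list :: "'a::linorder set \<Rightarrow> ('a \<Rightarrow> 'a \<Rightarrow> bool) \<Rightarrow> ('a \<times> 'a) list" where
  "arc_list V E = sorted_list_of_set (arcs V E)"

definition arc_matrix :: "'a::linorder set \<Rightarrow> ('a \<Rightarrow> 'a \<Rightarrow> bool)
    \<Rightarrow> ('a \<times> 'a \<Rightarrow> 'a \<times> 'a \<Rightarrow> real) \<Rightarrow> complex mat" where
  "arc_matrix V E p = (let as = arc_list V E; m = length as in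
     mat m m (\<lambda>(i, j). complex_of_real (p (as ! i) (as ! j))))"

definition edge_trans :: "'a set \<Rightarrow> ('a \<Rightarrow> 'a \<Rightarrow> bool) \<Rightarrow> 'a \<times> 'a \<Rightarrow> 'a \<times> 'a \<Rightarrow> real" where
  "edge_trans V E a b = (if fst b = snd a \<and> E (fst b) (snd b)
      then 1 / real (deg V E (snd a)) else 0)"

definition nb_trans :: "'a set \<Rightarrow> ('a \<Rightarrow> 'a \<Rightarrow> bool) \<Rightarrow> 'a \<times> 'a \<Rightarrow> 'a \<times> 'a \<Rightarrow> real" where
  "nb_trans V E a b = (if fst b = snd a \<and> E (fst b) (snd b) \<and> snd b \<noteq> fst a
      then 1 / (real (deg V E (snd a)) - 1) else 0)"

definition K_e :: "'a::linorder set \<Rightarrow> ('a \<Rightarrow> 'a \<Rightarrow> bool) \<Rightarrow> complex" where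
  "K_e V E = kemeny (arc_matrix V E (edge_trans V E))"

definition K_nb :: "'a::linorder set \<Rightarrow> ('a \<Rightarrow> 'a \<Rightarrow> bool) \<Rightarrow> complex" where
  "K_nb V E = kemeny (arc_matrix V E (nb_trans V E))"

end

(* Write A for the adjacency matrix, S and T for the tail and head incidence matrices of the
   arcs and J for arc reversal. The two walks have transition matrices T S^T / d and
   (T S^T - J) / (d - 1); Sylvester's identity det (1 - X Y) = det (1 - Y X) and, for the second
   walk, the Ihara-Bass identity express both characteristic polynomials through that of A.
   The spectrum of A is real, lies in [-d, d] and contains d exactly once, so it is
   d, x_1, ..., x_(n-1) with all x_i < d, and one obtains
     K_e - K_nb = 2 * sum_i 1 / (d - x_i) - n / d - 1 / (d - 2).
   As sum_i x_i = -d, convexity of 1 / (d - x) bounds the sum below by (n - 1)^2 / (n d), which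
   is enough unless n = d + 1 with d = 3, 4 (K_4, K_5) or d = 3, n = 6. In the last case a
   triangle-free graph is K_{3,3}; otherwise sum_i x_i^3 = tr A^3 - 27 >= -26, and with
   sum_i x_i^2 = 9 a cubic minorant of 1 / (3 - x) gives the bound. *)

theory Submission
  imports Defs "Jordan_Normal_Form.Schur_Decomposition"
begin

lemma poly_eqI_cofinite:
  fixes p q :: "'a::{idom,ring_char_0} poly"
  assumes "finite F" and "\<And>x. x \<notin> F \<Longrightarrow> poly p x = poly q x"
  shows "p = q"
proof (rule ccontr)
  assume "p \<noteq> q"
  then have "finite {x. poly (p - q) x = 0}" by (intro poly_roots_finite) simp
  moreover have "- F \<subseteq> {x. poly (p - q) x = 0}" using assms(2) by auto
  ultimately have "finite (F \<union> - F)" using assms(1) finite_subset by blast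
  then show False using infinite_UNIV_char_0[where 'a = 'a] by simp
qed

lemma proots_linear_factors: "proots (\<Prod>a\<leftarrow>es. [:- a, 1:]) = mset es"
  for es :: "'a::idom list"
proof (induction es)
  case (Cons a es)
  have "proots ([:- a, 1:] * (\<Prod>a\<leftarrow>es. [:- a, 1:])) = proots [:- a, 1:] + proots (\<Prod>a\<leftarrow>es. [:- a, 1:])"
    by (rule proots_mult) (auto simp: prod_list_zero_iff)
  then show ?case using Cons by simp
qed simp

lemma sum_proots_quadratic_inverse_one_minus:
  fixes p q :: complex
  assumes "1 + q + p \<noteq> 0"
  shows "(\<Sum>\<rho>\<in>#proots [:p, q, 1:]. 1 / (1 - \<rho>)) = (2 + q) / (1 + q + p)"
proof -
  define s where "s = csqrt (q\<^sup>2 - 4 * p)"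
  define r1 where "r1 = (- q + s) / 2"
  define r2 where "r2 = (- q - s) / 2"
  have ss: "s * s = q\<^sup>2 - 4 * p" unfolding s_def by (metis power2_csqrt power2_eq_square)
  have sum: "r1 + r2 = - q" unfolding r1_def r2_def by (simp add: field_simps)
  have prod: "r1 * r2
      = p" unfolding r1_def r2_def using ss by (simp add: field_simps power2_eq_square)
  have "q = - (r1 + r2)" using sum by simp
  then have factors: "[:p, q, 1:] = [:- r1, 1:] * [:- r2, 1:]"
    by (simp add: prod[symmetric] algebra_simps)
  have roots: "proots [:p, q, 1:] = {#r1, r2#}"
    unfolding factors by (subst proots_mult) auto
  have denom: "(1 - r1) * (1 - r2) = 1 + q + p"
    using sum prod by (simp add: algebra_simps)
  with assms have "1 - r1 \<noteq> 0" "1 - r2 \<noteq> 0" by auto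
  then have "1 / (1 - r1) + 1 / (1 - r2) = (2 - (r1 + r2)) / ((1 - r1) * (1 - r2))"
    by (simp add: field_simps)
  then show ?thesis by (simp add: roots sum denom)
qed

lemma prod_list_map_const_mult:
  "(\<Prod>x\<leftarrow>xs. c * f x) = c ^ length xs * (\<Prod>x\<leftarrow>xs. f x)" for c :: "'a::comm_monoid_mult"
  by (induction xs) (auto simp: ac_simps)

lemma prod_list_map_mset_cong:
  "mset xs = mset ys \<Longrightarrow> (\<Prod>x\<leftarrow>xs. f x) = (\<Prod>x\<leftarrow>ys. f x)"
  for f :: "'a \<Rightarrow> 'b::comm_monoid_mult"
  using prod_mset_prod_list[of "map f xs"] prod_mset_prod_list[of "map f ys"] by simp

lemma prod_list_diff_real_pos:
  assumes "\<And>\<mu>. \<mu> \<in> set ms \<Longrightarrow> Im \<mu> = 0 \<and> Re \<mu> < D"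
  shows "\<exists>r>0. (\<Prod>\<mu>\<leftarrow>ms. complex_of_real D - \<mu>) = complex_of_real r"
  using assms
proof (induction ms)
  case (Cons \<mu> ms)
  then obtain r where "r > 0" "(\<Prod>\<mu>\<leftarrow>ms. complex_of_real D - \<mu>) = complex_of_real r" by auto
  moreover have "complex_of_real D - \<mu> = complex_of_real (D - Re \<mu>)"
    using Cons.prems by (simp add: complex_eq_iff)
  ultimately show ?case using Cons.prems by (intro exI[of _ "(D - Re \<mu>) * r"]) auto
qed (auto intro: exI[of _ 1])

lemma sum_mset_image_mset_mset: "(\<Sum>x\<in>#image_mset g (mset xs). f x) = (\<Sum>x\<leftarrow>xs. f (g x))"
  by (induction xs) auto

lemma sum_mset_sum_list_msets: "(\<Sum>\<rho>\<in>#(\<Sum>x\<leftarrow>xs. M x). f \<rho>) = (\<Sum>x\<leftarrow>xs. \<Sum>\<rho>\<in>#M x. f \<rho>)"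
  by (induction xs) auto

lemma sum_list_of_real_map: "(\<Sum>x\<leftarrow>xs. of_real (f x)) = of_real (\<Sum>x\<leftarrow>xs. f x)"
  by (induction xs) auto

section \<open>Determinants and traces\<close>

lemma poly_char_poly_eq_det:
  fixes A :: "'a::field mat"
  assumes "A \<in> carrier_mat n n"
  shows "poly (char_poly A) x = det (x \<cdot>\<^sub>m 1\<^sub>m n - A)"
proof -
  have "- char_matrix A x = x \<cdot>\<^sub>m 1\<^sub>m n - A"
    using assms by (intro eq_matI) (auto simp: char_matrix_def)
  then show ?thesis using char_poly_matrix[OF assms] by simp
qed

lemma length_char_poly_linear_factors:
  fixes A :: "'a::field mat"
  assumes "A \<in> carrier_mat n n" and "char_poly A = (\<Prod>a\<leftarrow>es. [:- a, 1:])"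
  shows "length es = n"
  using degree_monic_char_poly[OF assms(1)] degree_linear_factors[of uminus es] assms(2) by simp

text \<open>Sylvester's determinant identity, via the two block factorisations of
  the matrix with blocks 1, X, Y, 1.\<close>

lemma det_one_minus_mult_comm:
  fixes X :: "'a::idom mat"
  assumes X: "X \<in> carrier_mat N n" and Y: "Y \<in> carrier_mat n N"
  shows "det (1\<^sub>m N - X * Y) = det (1\<^sub>m n - Y * X)"
proof -
  define M where "M = four_block_mat (1\<^sub>m N) X Y (1\<^sub>m n)"
  define L where "L = four_block_mat (1\<^sub>m N) (0\<^sub>m N n) Y (1\<^sub>m n)"
  have XY: "X * Y \<in> carrier_mat N N" and YX: "Y * X \<in> carrier_mat n n" using X Y by auto
  have "L * four_block_mat (1\<^sub>m N) X (0\<^sub>m n N) (1\<^sub>m n - Y * X) = M"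
    unfolding M_def L_def
    by (subst mult_four_block_mat[OF one_carrier_mat zero_carrier_mat Y one_carrier_mat
          one_carrier_mat X zero_carrier_mat minus_carrier_mat[OF YX]])
      (use X Y YX in \<open>auto simp: mult_minus_distrib_mat\<close>)
  then have "det M = det L * det (four_block_mat (1\<^sub>m N) X (0\<^sub>m n N) (1\<^sub>m n - Y * X))"
    unfolding L_def
    by (metis det_mult four_block_carrier_mat one_carrier_mat zero_carrier_mat X Y YX minus_carrier_mat)
  also have "\<dots> = det (1\<^sub>m n - Y * X)"
    unfolding L_def
    by (subst det_four_block_mat_upper_right_zero[of _ N _ n], insert Y, auto,
        subst det_four_block_mat_lower_left_zero[of _ N _ n], insert X YX, auto)
  finally have left: "det M = det (1\<^sub>m n - Y * X)" .
  have "four_block_mat (1\<^sub>m N - X * Y) X (0\<^sub>m n N) (1\<^sub>m n) * L = M"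
    unfolding M_def L_def
    by (subst mult_four_block_mat[OF minus_carrier_mat[OF XY] X zero_carrier_mat one_carrier_mat
          one_carrier_mat zero_carrier_mat Y one_carrier_mat])
      (use X Y XY in \<open>auto simp: add_mult_distrib_mat minus_add_uminus_mat\<close>)
  then have "det M = det (four_block_mat (1\<^sub>m N - X * Y) X (0\<^sub>m n N) (1\<^sub>m n)) * det L"
    unfolding L_def
    by (metis det_mult four_block_carrier_mat one_carrier_mat zero_carrier_mat X Y XY minus_carrier_mat)
  also have "\<dots> = det (1\<^sub>m N - X * Y)"
    unfolding L_def
    by (subst det_four_block_mat_upper_right_zero[of _ N _ n], insert Y, auto,
        subst det_four_block_mat_lower_left_zero[of _ N _ n], insert X XY, auto)
  finally show ?thesis using left by simp
qed

lemma det_smult_one_minus_mult_comm: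
  fixes X :: "'a::field mat"
  assumes X: "X \<in> carrier_mat N n" and Y: "Y \<in> carrier_mat n N" and "z \<noteq> 0" and "n \<le> N"
  shows "det (z \<cdot>\<^sub>m 1\<^sub>m N - X * Y) = z ^ (N - n) * det (z \<cdot>\<^sub>m 1\<^sub>m n - Y * X)"
proof -
  have scale: "z \<cdot>\<^sub>m 1\<^sub>m m - Z = z \<cdot>\<^sub>m (1\<^sub>m m - (1 / z) \<cdot>\<^sub>m Z)" if "Z \<in> carrier_mat m m" for Z m
    using that \<open>z \<noteq> 0\<close> by (intro eq_matI) (auto simp: field_simps)
  have "det (z \<cdot>\<^sub>m 1\<^sub>m N - X * Y) = z ^ N * det (1\<^sub>m N - ((1 / z) \<cdot>\<^sub>m X) * Y)"
    using X Y by (simp add: scale[of "X * Y"] mult_smult_assoc_mat)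
  also have "det (1\<^sub>m N - ((1 / z) \<cdot>\<^sub>m X) * Y) = det (1\<^sub>m n - Y * ((1 / z) \<cdot>\<^sub>m X))"
    using X Y by (intro det_one_minus_mult_comm) auto
  also have "\<dots> = (1 / z) ^ n * det (z \<cdot>\<^sub>m 1\<^sub>m n - Y * X)"
    using X Y by (simp add: scale[of "Y * X"] mult_smult_distrib power_one_over)
      (simp add: \<open>z \<noteq> 0\<close> field_simps)
  finally show ?thesis
    using \<open>z \<noteq> 0\<close> \<open>n \<le> N\<close> by (simp add: power_diff power_one_over)
qed

lemma det_diff_smult_factorized:
  fixes A :: "'a::field mat"
  assumes A: "A \<in> carrier_mat n n" and es: "char_poly A = (\<Prod>a\<leftarrow>es. [:- a, 1:])" and "c \<noteq> 0"
  shows "det (x \<cdot>\<^sub>m 1\<^sub>m n - c \<cdot>\<^sub>m A) = (\<Prod>a\<leftarrow>es. x - c * a)"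
proof -
  have len: "length es = n" by (rule length_char_poly_linear_factors[OF A es])
  have "x \<cdot>\<^sub>m 1\<^sub>m n - c \<cdot>\<^sub>m A = c \<cdot>\<^sub>m ((x / c) \<cdot>\<^sub>m 1\<^sub>m n - A)"
    using A \<open>c \<noteq> 0\<close> by (intro eq_matI) (auto simp: field_simps)
  then have "det (x \<cdot>\<^sub>m 1\<^sub>m n - c \<cdot>\<^sub>m A) = c ^ n * (\<Prod>a\<leftarrow>es. x / c - a)"
    using A by (simp add: poly_char_poly_eq_det[OF A, symmetric] es poly_prod_list o_def)
  also have "\<dots> = (\<Prod>a\<leftarrow>es. c * (x / c - a))"
    by (simp add: prod_list_map_const_mult len)
  finally show ?thesis
    using \<open>c \<noteq> 0\<close> by (simp add: right_diff_distrib)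
qed

definition trace_mat :: "'a::comm_ring_1 mat \<Rightarrow> 'a" where
  "trace_mat A = (\<Sum>i<dim_row A. A $$ (i, i))"

lemma trace_mat_mult_comm:
  fixes A :: "'a::comm_ring_1 mat"
  assumes A: "A \<in> carrier_mat n m" and B: "B \<in> carrier_mat m n"
  shows "trace_mat (A * B) = trace_mat (B * A)"
proof -
  have "trace_mat (A * B) = (\<Sum>i<n. \<Sum>j<m. A $$ (i, j) * B $$ (j, i))"
    using A B by (auto simp: trace_mat_def scalar_prod_def lessThan_atLeast0 intro!: sum.cong)
  also have "\<dots> = (\<Sum>j<m. \<Sum>i<n. B $$ (j, i) * A $$ (i, j))"
    by (subst sum.swap) (simp add: mult.commute)
  also have "\<dots> = trace_mat (B * A)"
    using A B by (auto simp: trace_mat_def scalar_prod_def lessThan_atLeast0 intro!: sum.cong)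
  finally show ?thesis .
qed

lemma upper_triangular_mult:
  fixes A B :: "'a::comm_ring_1 mat"
  assumes A: "A \<in> carrier_mat n n" and B: "B \<in> carrier_mat n n"
    and "upper_triangular A" and "upper_triangular B"
  shows "upper_triangular (A * B)"
    and "i < n \<Longrightarrow> (A * B) $$ (i, i) = A $$ (i, i) * B $$ (i, i)"
proof -
  have entry: "(A * B) $$ (i, j)
      = (\<Sum>k\<in>{0..<n}. A $$ (i, k) * B $$ (k, j))" if "i < n" "j < n" for i j
    using A B that by (auto simp: scalar_prod_def)
  have vanish: "A $$ (i, k) * B $$ (k, j) = 0" if "i < n" "k < n" "k < i \<or> j < k" for i j k
    using that assms(3,4) A B by (auto dest: upper_triangularD)
  show "upper_triangular (A * B)"
  proof
    fix i j assume "j < i" "i < dim_row (A * B)"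
    moreover have "A $$ (i, k) * B $$ (k, j) = 0" if "k \<in> {0..<n}" for k
      using that calculation A by (intro vanish) auto
    ultimately show "(A * B) $$ (i, j) = 0"
      using A entry by (auto intro!: sum.neutral)
  qed
  assume "i < n"
  then have "(A * B) $$ (i, i)
      = A $$ (i, i) * B $$ (i, i) + (\<Sum>k\<in>{0..<n} - {i}. A $$ (i, k) * B $$ (k, i))"
    using entry by (simp add: sum.remove[of _ i])
  also have "(\<Sum>k\<in>{0..<n} - {i}. A $$ (i, k) * B $$ (k, i)) = 0"
    using \<open>i < n\<close> vanish by (intro sum.neutral) (auto simp: neq_iff)
  finally show "(A * B) $$ (i, i) = A $$ (i, i) * B $$ (i, i)" by simp
qed

lemma upper_triangular_pow_mat:
  fixes B :: "'a::comm_ring_1 mat"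
  assumes B: "B \<in> carrier_mat n n" and ut: "upper_triangular B"
  shows "upper_triangular (B ^\<^sub>m k) \<and> (\<forall>i<n. (B ^\<^sub>m k) $$ (i, i) = B $$ (i, i) ^ k)"
proof (induction k)
  case 0
  show ?case using B by auto
next
  case (Suc k)
  have "B ^\<^sub>m k \<in> carrier_mat n n" using B by simp
  then show ?case
    using Suc upper_triangular_mult[OF _ B _ ut] by simp
qed

lemma trace_pow_mat_eq_power_sum:
  fixes A :: "'a::conjugatable_ordered_field mat"
  assumes A: "A \<in> carrier_mat n n" and es: "char_poly A = (\<Prod>a\<leftarrow>es. [:- a, 1:])"
  shows "trace_mat (A ^\<^sub>m k) = (\<Sum>a\<leftarrow>es. a ^ k)"
proof -
  obtain B P Q where "schur_decomposition A es = (B, P, Q)" by (cases "schur_decomposition A es")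
  from schur_decomposition[OF A es this]
  have sim: "similar_mat_wit A B P Q" and ut: "upper_triangular B" and diag: "diag_mat B = es"
    by auto
  from similar_mat_witD2[OF A sim] have B: "B \<in> carrier_mat n n" and P: "P \<in> carrier_mat n n"
    and Q: "Q \<in> carrier_mat n n" and QP: "Q * P = 1\<^sub>m n"
    by auto
  have Bk: "B ^\<^sub>m k \<in> carrier_mat n n" using B by simp
  have "trace_mat (A ^\<^sub>m k) = trace_mat (P * B ^\<^sub>m k * Q)"
    by (simp add: similar_mat_wit_pow_id[OF sim])
  also have "\<dots> = trace_mat (Q * (P * B ^\<^sub>m k))"
    using P Q Bk by (intro trace_mat_mult_comm) auto
  also have "Q * (P * B ^\<^sub>m k) = B ^\<^sub>m k"
    using P Q Bk QP by (simp add: assoc_mult_mat[symmetric, of Q n n P n] left_mult_one_mat[OF Bk])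
  also have "trace_mat (B ^\<^sub>m k) = (\<Sum>i<n. B $$ (i, i) ^ k)"
    using upper_triangular_pow_mat[OF B ut] B by (simp add: trace_mat_def)
  also have "\<dots> = (\<Sum>a\<leftarrow>diag_mat B. a ^ k)"
    using B by (simp add: diag_mat_def interv_sum_list_conv_sum_set_nat lessThan_atLeast0 o_def)
  finally show ?thesis using diag by simp
qed

section \<open>Real symmetric matrices\<close>

lemma root_char_poly_real_weights_eigenfunction:
  fixes X :: "complex mat" and w :: "nat \<Rightarrow> nat \<Rightarrow> real"
  assumes X: "X \<in> carrier_mat n n" and Xw: "\<And>i j. i < n \<Longrightarrow> j < n \<Longrightarrow> X $$ (i, j) = of_real (w i j)"
    and root: "poly (char_poly X) \<mu> = 0"
  obtains f where "\<And>i. i < n \<Longrightarrow> (\<Sum>j<n. of_real (w i j) * f j) = \<mu> * f i"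
    and "(\<Sum>i<n. (cmod (f i))\<^sup>2) > 0"
proof -
  have "eigenvalue X \<mu>" using eigenvalue_root_char_poly[OF X] root by simp
  then obtain v where "eigenvector X v \<mu>" unfolding eigenvalue_def by blast
  then have v: "v \<in> carrier_vec n" and v0: "v \<noteq> 0\<^sub>v n" and Xv: "X *\<^sub>v v = \<mu> \<cdot>\<^sub>v v"
    unfolding eigenvector_def using X by auto
  have ev: "(\<Sum>j<n. of_real (w i j) * v $ j) = \<mu> * v $ i" if i: "i < n" for i
  proof -
    have "(X *\<^sub>v v) $ i = (\<Sum>j\<in>{0..<n}. X $$ (i, j) * v $ j)"
      using X v i by (auto simp: scalar_prod_def)
    also have "\<dots> = (\<Sum>j<n. of_real (w i j) * v $ j)"
      unfolding lessThan_atLeast0 by (rule sum.cong) (auto simp: Xw i)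
    finally show ?thesis using Xv i v by simp
  qed
  obtain i where i: "i < n" and vi: "v $ i \<noteq> 0"
    using v v0 by (metis eq_vecI carrier_vecD index_zero_vec(1,2))
  have "0 < (cmod (v $ i))\<^sup>2" using vi by simp
  also have "\<dots> \<le> (\<Sum>i<n. (cmod (v $ i))\<^sup>2)"
    using i by (intro member_le_sum) auto
  finally show ?thesis using that ev by blast
qed

lemma symmetric_eigen_quadratic_form:
  fixes w :: "nat \<Rightarrow> nat \<Rightarrow> real" and f :: "nat \<Rightarrow> complex"
  assumes ev: "\<And>i. i < n \<Longrightarrow> (\<Sum>j<n. of_real (w i j) * f j) = \<mu> * f i"
  shows "(\<Sum>i<n. \<Sum>j<n. of_real (w i j) * (cnj (f i) * f j)) = \<mu> * of_real (\<Sum>i<n. (cmod (f i))\<^sup>2)"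
proof -
  have "(\<Sum>i<n. \<Sum>j<n. of_real (w i j) * (cnj (f i) * f j))
      = (\<Sum>i<n. cnj (f i) * (\<Sum>j<n. of_real (w i j) * f j))"
    by (simp add: sum_distrib_left algebra_simps)
  also have "\<dots> = (\<Sum>i<n. cnj (f i) * (\<mu> * f i))"
    by (intro sum.cong refl) (simp only: lessThan_iff ev)
  also have "\<dots> = \<mu> * (\<Sum>i<n. cnj (f i) * f i)"
    by (simp only: sum_distrib_left ac_simps)
  also have "(\<Sum>i<n. cnj (f i) * f i) = of_real (\<Sum>i<n. (cmod (f i))\<^sup>2)"
    unfolding of_real_sum by (intro sum.cong refl) (simp only: complex_norm_square mult.commute)
  finally show ?thesis .
qed

lemma symmetric_eigenvalue_real:
  fixes w :: "nat \<Rightarrow> nat \<Rightarrow> real" and f :: "nat \<Rightarrow> complex"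
  assumes sym: "\<And>i j. w i j = w j i"
    and ev: "\<And>i. i < n \<Longrightarrow> (\<Sum>j<n. of_real (w i j) * f j) = \<mu> * f i"
    and nonzero: "(\<Sum>i<n. (cmod (f i))\<^sup>2) > 0"
  shows "Im \<mu> = 0"
proof -
  define T where "T = (\<Sum>i<n. \<Sum>j<n. w i j * Im (cnj (f i) * f j))"
  have "T = (\<Sum>i<n. \<Sum>j<n. w j i * Im (cnj (f j) * f i))"
    unfolding T_def by (rule sum.swap)
  also have "\<dots> = - T"
    unfolding T_def by (simp add: sum_negf[symmetric] sym algebra_simps)
  finally have "T = 0" by simp
  moreover have "Im (\<Sum>i<n. \<Sum>j<n. of_real (w i j) * (cnj (f i) * f j)) = T"
    unfolding T_def by (simp add: Im_sum)
  ultimately have "Im \<mu> * (\<Sum>i<n. (cmod (f i))\<^sup>2) = 0"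
    using symmetric_eigen_quadratic_form[OF ev] by simp
  then show ?thesis using nonzero by simp
qed

text \<open>For s = 1 and s = -1 this Dirichlet-form identity bounds Re \<mu> above and below by
  the maximal row sum.\<close>

lemma symmetric_eigen_dirichlet_form:
  fixes w :: "nat \<Rightarrow> nat \<Rightarrow> real" and f :: "nat \<Rightarrow> complex"
  assumes sym: "\<And>i j. w i j = w j i"
    and ev: "\<And>i. i < n \<Longrightarrow> (\<Sum>j<n. of_real (w i j) * f j) = \<mu> * f i"
    and "s\<^sup>2 = 1"
  shows "(\<Sum>i<n. \<Sum>j<n. w i j * (cmod (f i - of_real s * f j))\<^sup>2)
    = 2 * (\<Sum>i<n. (\<Sum>j<n. w i j) * (cmod (f i))\<^sup>2) - 2 * s * Re \<mu> * (\<Sum>i<n. (cmod (f i))\<^sup>2)"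
proof -
  have "(cmod (a - of_real s * b))\<^sup>2
      = (cmod a)\<^sup>2 + s\<^sup>2 * (cmod b)\<^sup>2 - 2 * s * Re (cnj a * b)" for a b
    by (simp only: cmod_power2) (simp add: power2_eq_square algebra_simps)
  then have expand: "(cmod (a - of_real s * b))\<^sup>2
      = (cmod a)\<^sup>2 + (cmod b)\<^sup>2 - 2 * s * Re (cnj a * b)" for a b
    using \<open>s\<^sup>2 = 1\<close> by simp
  have cross: "(\<Sum>i<n. \<Sum>j<n. w i j * Re (cnj (f i) * f j)) = Re \<mu> * (\<Sum>i<n. (cmod (f i))\<^sup>2)"
    using arg_cong[OF symmetric_eigen_quadratic_form[OF ev], of Re] by (simp add: Re_sum)
  have "(\<Sum>i<n. \<Sum>j<n. w i j * (cmod (f i - of_real s * f j))\<^sup>2)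
      = (\<Sum>i<n. \<Sum>j<n. w i j * (cmod (f i))\<^sup>2) + (\<Sum>i<n. \<Sum>j<n. w i j * (cmod (f j))\<^sup>2)
        - 2 * s * (\<Sum>i<n. \<Sum>j<n. w i j * Re (cnj (f i) * f j))"
    by (simp add: expand sum_subtractf sum.distrib sum_distrib_left algebra_simps)
  also have "(\<Sum>i<n. \<Sum>j<n. w i j * (cmod (f j))\<^sup>2) = (\<Sum>i<n. \<Sum>j<n. w i j * (cmod (f i))\<^sup>2)"
    by (subst sum.swap) (simp add: sym)
  also have "(\<Sum>i<n. \<Sum>j<n. w i j * (cmod (f i))\<^sup>2) = (\<Sum>i<n. (\<Sum>j<n. w i j) * (cmod (f i))\<^sup>2)"
    by (simp add: sum_distrib_right)
  finally show ?thesis using cross by simp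
qed

lemma eigenvalue_real_bounded_by_row_sum:
  fixes X :: "complex mat" and w :: "nat \<Rightarrow> nat \<Rightarrow> real"
  assumes X: "X \<in> carrier_mat n n" and Xw: "\<And>i j. i < n \<Longrightarrow> j < n \<Longrightarrow> X $$ (i, j) = of_real (w i j)"
    and sym: "\<And>i j. w i j = w j i" and nonneg: "\<And>i j. w i j \<ge> 0"
    and row_sum: "\<And>i. i < n \<Longrightarrow> (\<Sum>j<n. w i j) \<le> D"
    and root: "poly (char_poly X) \<mu> = 0"
  shows "Im \<mu> = 0" and "\<bar>Re \<mu>\<bar> \<le> D"
proof -
  obtain f where ev: "\<And>i. i < n \<Longrightarrow> (\<Sum>j<n. of_real (w i j) * f j) = \<mu> * f i"
    and pos: "(\<Sum>i<n. (cmod (f i))\<^sup>2) > 0"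
    using root_char_poly_real_weights_eigenfunction[OF X Xw root] by blast
  show "Im \<mu> = 0" by (rule symmetric_eigenvalue_real[OF sym ev pos])
  define N where "N = (\<Sum>i<n. (cmod (f i))\<^sup>2)"
  have upper: "(\<Sum>i<n. (\<Sum>j<n. w i j) * (cmod (f i))\<^sup>2) \<le> D * N"
    unfolding N_def sum_distrib_left using row_sum by (intro sum_mono mult_right_mono) auto
  have "s * Re \<mu> * N \<le> D * N" if "s\<^sup>2 = 1" for s
  proof -
    have "0 \<le> (\<Sum>i<n. \<Sum>j<n. w i j * (cmod (f i - of_real s * f j))\<^sup>2)"
      using nonneg by (intro sum_nonneg mult_nonneg_nonneg) auto
    then show ?thesis
      using symmetric_eigen_dirichlet_form[OF sym ev that] upper unfolding N_def by linarith
  qed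
  from this[of 1] this[of "-1"] have "Re \<mu> * N \<le> D * N" "(- Re \<mu>) * N \<le> D * N"
    by simp_all
  then have "Re \<mu> \<le> D" "- Re \<mu> \<le> D"
    using pos unfolding N_def by (metis mult_right_le_imp_le)+
  then show "\<bar>Re \<mu>\<bar> \<le> D" by linarith
qed

lemma symmetric_eigenfunction_top_row_sum:
  fixes w :: "nat \<Rightarrow> nat \<Rightarrow> real" and f :: "nat \<Rightarrow> complex"
  assumes sym: "\<And>i j. w i j = w j i" and nonneg: "\<And>i j. w i j \<ge> 0"
    and row_sum: "\<And>i. i < n \<Longrightarrow> (\<Sum>j<n. w i j) \<le> D"
    and ev: "\<And>i. i < n \<Longrightarrow> (\<Sum>j<n. of_real (w i j) * f j) = of_real D * f i"
  shows "\<And>i j. i < n \<Longrightarrow> j < n \<Longrightarrow> w i j * (cmod (f i - f j))\<^sup>2 = 0"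
    and "\<And>i. i < n \<Longrightarrow> (D - (\<Sum>j<n. w i j)) * (cmod (f i))\<^sup>2 = 0"
proof -
  define S1 where "S1 = (\<Sum>i<n. \<Sum>j<n. w i j * (cmod (f i - of_real 1 * f j))\<^sup>2)"
  define S2 where "S2 = (\<Sum>i<n. (D - (\<Sum>j<n. w i j)) * (cmod (f i))\<^sup>2)"
  define R where "R = (\<Sum>i<n. (\<Sum>j<n. w i j) * (cmod (f i))\<^sup>2)"
  have "S1 = 2 * R - 2 * D * (\<Sum>i<n. (cmod (f i))\<^sup>2)"
    unfolding S1_def R_def using symmetric_eigen_dirichlet_form[OF sym ev, of 1] by simp
  moreover have "S2 = D * (\<Sum>i<n. (cmod (f i))\<^sup>2) - R"
    unfolding S2_def R_def by (simp add: left_diff_distrib sum_subtractf sum_distrib_left)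
  ultimately have S12: "S1 = - 2 * S2" by simp
  have inner: "0 \<le> (\<Sum>j<n. w i j * (cmod (f i - of_real 1 * f j))\<^sup>2)" for i
    using nonneg by (intro sum_nonneg mult_nonneg_nonneg) auto
  then have "S1 \<ge> 0" unfolding S1_def by (simp add: sum_nonneg)
  have terms2: "\<And>i. i < n \<Longrightarrow> 0 \<le> (D - (\<Sum>j<n. w i j)) * (cmod (f i))\<^sup>2"
    using row_sum by simp
  then have "S2 \<ge> 0" unfolding S2_def by (intro sum_nonneg) auto
  with S12 \<open>S1 \<ge> 0\<close> have "S1 = 0" "S2 = 0" by auto
  show "(D - (\<Sum>j<n. w i j)) * (cmod (f i))\<^sup>2 = 0" if "i < n" for i
    using \<open>S2 = 0\<close> terms2 that unfolding S2_def by (subst (asm) sum_nonneg_eq_0_iff) auto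
  show "w i j * (cmod (f i - f j))\<^sup>2 = 0" if "i < n" "j < n" for i j
  proof -
    have "(\<Sum>j<n. w i j * (cmod (f i - of_real 1 * f j))\<^sup>2) = 0"
      using \<open>S1 = 0\<close> inner that unfolding S1_def by (subst (asm) sum_nonneg_eq_0_iff) auto
    moreover have "0 \<le> w i j' * (cmod (f i - of_real 1 * f j'))\<^sup>2" for j'
      using nonneg by simp
    ultimately show ?thesis
      using that by (subst (asm) sum_nonneg_eq_0_iff) auto
  qed
qed

section \<open>Estimates for sums over the spectrum\<close>

lemma inverse_diff_ge_tangent:
  fixes x t D :: real
  assumes "x < D" "t < D"
  shows "1 / (D - t) + (x - t) / (D - t)\<^sup>2 \<le> 1 / (D - x)"
proof -
  define u w where "u = D - x" and "w = D - t"
  have "u > 0" "w > 0" using assms unfolding u_def w_def by auto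
  then have "1 / u - (1 / w + (w - u) / w\<^sup>2) = (w - u)\<^sup>2 / (u * w\<^sup>2)"
    by (simp add: field_simps power2_eq_square)
  moreover have "(w - u)\<^sup>2 / (u * w\<^sup>2) \<ge> 0" using \<open>u > 0\<close> by simp
  moreover have "x - t = w - u" unfolding u_def w_def by simp
  ultimately show ?thesis by (simp add: u_def[symmetric] w_def[symmetric])
qed

text \<open>Jensen's inequality for the convex function 1 / (D - x), from its tangent at the mean.\<close>

lemma sum_list_inverse_diff_ge:
  fixes xs :: "real list" and D :: real
  assumes "xs \<noteq> []" and below: "\<And>x. x \<in> set xs \<Longrightarrow> x < D" and "sum_list xs < length xs * D"
  shows "(real (length xs))\<^sup>2 / (length xs * D - sum_list xs) \<le> (\<Sum>x\<leftarrow>xs. 1 / (D - x))"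
proof -
  define m where "m = real (length xs)"
  define t where "t = sum_list xs / m"
  have m: "m > 0" using assms(1) unfolding m_def by simp
  have "t < D" using assms(3) m unfolding t_def m_def by (simp add: field_simps)
  have "(\<Sum>x\<leftarrow>xs. 1 / (D - t) + (x - t) / (D - t)\<^sup>2)
      = m / (D - t) + (sum_list xs - m * t) / (D - t)\<^sup>2"
  proof -
    have "(\<Sum>x\<leftarrow>ys. a + (x - t) / c) = length ys * a + (sum_list ys - length ys * t) / c"
      for ys :: "real list" and a c :: real
      by (induction ys) (simp_all add: algebra_simps add_divide_distrib diff_divide_distrib)
    from this[where ys = xs and a = "1 / (D - t)" and c = "(D - t)\<^sup>2"] show ?thesis
      unfolding m_def by simp
  qed
  also have "sum_list xs - m * t = 0" unfolding t_def using m by simp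
  also have "m / (D - t) + 0 / (D - t)\<^sup>2 = m\<^sup>2 / (m * D - sum_list xs)"
    using m \<open>t < D\<close> unfolding t_def by (simp add: field_simps power2_eq_square)
  finally have "m\<^sup>2 / (m * D - sum_list xs) = (\<Sum>x\<leftarrow>xs. 1 / (D - t) + (x - t) / (D - t)\<^sup>2)" ..
  also have "\<dots> \<le> (\<Sum>x\<leftarrow>xs. 1 / (D - x))"
    using below \<open>t < D\<close> by (intro sum_list_mono inverse_diff_ge_tangent)
  finally show ?thesis unfolding m_def .
qed

lemma inverse_three_minus_ge_cubic:
  fixes x :: real
  assumes "x < 3"
  shows "(x ^ 3 + 9 * x\<^sup>2 + 36 * x + 108) / 324 \<le> 1 / (3 - x)"
proof -
  have "(x ^ 3 + 9 * x\<^sup>2 + 36 * x + 108) * (3 - x) = 324 - (x * (x + 3))\<^sup>2"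
    by (simp add: power2_eq_square power3_eq_cube algebra_simps)
  then have "(x ^ 3 + 9 * x\<^sup>2 + 36 * x + 108) * (3 - x) \<le> 324" by simp
  then show ?thesis using assms by (simp add: field_simps)
qed

lemma kemeny_gap_arith:
  fixes n d :: nat
  assumes "3 \<le> d" "d + 1 \<le> n" "even (n * d)"
    and "\<not> (d = 3 \<and> n = 4)" "\<not> (d = 4 \<and> n = 5)" "\<not> (d = 3 \<and> n = 6)"
  shows "real n / real d + 1 / (real d - 2) < 2 * (real n - 1)\<^sup>2 / (real d * real n)"
proof -
  define N D where "N = real n" and "D = real d"
  have "(d = 3 \<and> n \<ge> 8) \<or> (d = 4 \<and> n \<ge> 6) \<or> (d \<ge> 5 \<and> n \<ge> 6)"
  proof -
    have "d = 3 \<Longrightarrow> n \<ge> 8" using assms by (auto simp: even_mult_iff)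
    moreover have "d = 4 \<Longrightarrow> n \<ge> 6" using assms by auto
    moreover have "d \<ge> 5 \<Longrightarrow> n \<ge> 6" using assms by auto
    ultimately show ?thesis using assms(1) by linarith
  qed
  then have cases: "(D = 3 \<and> N \<ge> 8) \<or> (D = 4 \<and> N \<ge> 6) \<or> (D \<ge> 5 \<and> N \<ge> 6)"
    unfolding N_def D_def by auto
  have "D * N * N - 5 * D * N + 2 * D - 2 * N * N + 8 * N - 4 > 0"
  proof -
    from cases consider "D = 3" "N \<ge> 8" | "D = 4" "N \<ge> 6" | "D \<ge> 5" "N \<ge> 6" by blast
    then show ?thesis
    proof cases
      case 1
      then have "8 * N \<le> N * N" by (intro mult_right_mono) auto
      moreover have "D * N * N - 5 * D * N + 2 * D - 2 * N * N + 8 * N - 4 = N * N - 7 * N + 2"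
        using 1 by (simp add: algebra_simps)
      ultimately show ?thesis using 1 by linarith
    next
      case 2
      then have "6 * N \<le> N * N" by (intro mult_right_mono) auto
      moreover have "D * N * N - 5 * D * N + 2 * D - 2 * N * N + 8 * N - 4
          = 2 * (N * N) - 12 * N + 4"
        using 2 by (simp add: algebra_simps)
      ultimately show ?thesis by linarith
    next
      case 3
      then have "6 * N \<le> N * N" by (intro mult_right_mono) auto
      then have "0 \<le> (D - 5) * (N * N - 5 * N + 2)" "0 \<le> N * (3 * N - 17)"
        using 3 by (auto intro!: mult_nonneg_nonneg)
      moreover have "D * N * N - 5 * D * N + 2 * D - 2 * N * N + 8 * N - 4
          = (D - 5) * (N * N - 5 * N + 2) + N * (3 * N - 17) + 6"
        by (simp add: algebra_simps)
      ultimately show ?thesis by linarith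
    qed
  qed
  moreover have "2 * (N - 1)\<^sup>2 * (D - 2) - (N * N * (D - 2) + D * N)
      = D * N * N - 5 * D * N + 2 * D - 2 * N * N + 8 * N - 4"
    by (simp add: power2_eq_square algebra_simps)
  ultimately have num: "N * N * (D - 2) + D * N < 2 * (N - 1)\<^sup>2 * (D - 2)" by linarith
  have "D > 2" "N > 0" using assms unfolding D_def N_def by auto
  then have "N / D + 1 / (D - 2) = (N * N * (D - 2) + D * N) / (D * N * (D - 2))"
    by (simp add: field_simps)
  also have "\<dots> < 2 * (N - 1)\<^sup>2 * (D - 2) / (D * N * (D - 2))"
    using num \<open>D > 2\<close> \<open>N > 0\<close> by (intro divide_strict_right_mono) auto
  also have "\<dots> = 2 * (N - 1)\<^sup>2 / (D * N)"
    using \<open>D > 2\<close> by simp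
  finally show ?thesis unfolding N_def D_def .
qed

lemma two_sum_inverse_diff_gt:
  fixes xs :: "real list" and n d :: nat
  assumes "3 \<le> d" "d + 1 \<le> n" "length xs = n - 1" "even (n * d)"
    and below: "\<And>x. x \<in> set xs \<Longrightarrow> x < d" and sum: "sum_list xs = - real d"
    and "\<not> (d = 3 \<and> n = 4)" "\<not> (d = 4 \<and> n = 5)"
    and cubic_case: "d = 3 \<Longrightarrow> n = 6 \<Longrightarrow> (\<Sum>x\<leftarrow>xs. x\<^sup>2) = 9 \<and> - 26 \<le> (\<Sum>x\<leftarrow>xs. x ^ 3)"
  shows "real n / real d + 1 / (real d - 2) < 2 * (\<Sum>x\<leftarrow>xs. 1 / (real d - x))"
proof (cases "d = 3 \<and> n = 6")
  case True
  have "(\<Sum>x\<leftarrow>ys. (x ^ 3 + 9 * x\<^sup>2 + 36 * x + 108) / 324)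
      = ((\<Sum>x\<leftarrow>ys. x ^ 3) + 9 * (\<Sum>x\<leftarrow>ys. x\<^sup>2) + 36 * sum_list ys + 108 * length ys) / 324"
    for ys :: "real list"
    by (induction ys) (simp_all add: field_simps)
  then have "487 / 324 \<le> (\<Sum>x\<leftarrow>xs. (x ^ 3 + 9 * x\<^sup>2 + 36 * x + 108) / 324)"
    using True assms(3) sum cubic_case by simp
  also have "\<dots> \<le> (\<Sum>x\<leftarrow>xs. 1 / (3 - x))"
    using True below by (intro sum_list_mono inverse_three_minus_ge_cubic) auto
  finally show ?thesis using True by simp
next
  case False
  have "xs \<noteq> []" using assms(1-3) by auto
  moreover have "0 < real (length xs) * real d" using \<open>xs \<noteq> []\<close> assms(1) by simp
  ultimately have "(real (length xs))\<^sup>2 / (length xs * real d - sum_list xs) \<le> (\<Sum>x\<leftarrow>xs. 1 / (real d - x))"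
    using below sum by (intro sum_list_inverse_diff_ge) auto
  moreover have "real (length xs) = real n - 1" "length xs * real d - sum_list xs = real d * real n"
    using assms(2,3) sum by (auto simp: of_nat_diff algebra_simps)
  ultimately have "(real n - 1)\<^sup>2 / (real d * real n) \<le> (\<Sum>x\<leftarrow>xs. 1 / (real d - x))" by simp
  with kemeny_gap_arith[of d n] False assms show ?thesis by simp
qed

lemma kemeny_gap_eq:
  fixes xs :: "real list" and n d :: nat
  assumes "length xs + 1 = n" "3 \<le> d" "\<And>x. x \<in> set xs \<Longrightarrow> x < d"
  shows "(real n * (real d - 1) + (\<Sum>x\<leftarrow>xs. real d / (real d - x)))
      - (real n * (real d - 1)\<^sup>2 / real d + (real d - 1) / (real d - 2)
        + (\<Sum>x\<leftarrow>xs. (2 * real d - 2 - x) / (real d - x)))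
    = 2 * (\<Sum>x\<leftarrow>xs. 1 / (real d - x)) - real n / real d - 1 / (real d - 2)"
proof -
  have "real d / (real d - x) - (2 * real d - 2 - x) / (real d - x) = 2 * (1 / (real d - x)) - 1"
    if "x \<in> set xs" for x
  proof -
    have "real d - x \<noteq> 0" using assms(3)[OF that] by simp
    have "real d / (real d - x) - (2 * real d - 2 - x) / (real d - x)
        = (2 - (real d - x)) / (real d - x)"
      by (simp only: diff_divide_distrib[symmetric]) (simp add: algebra_simps)
    also have "\<dots> = 2 * (1 / (real d - x)) - 1"
      using \<open>real d - x \<noteq> 0\<close> by (simp add: diff_divide_distrib)
    finally show ?thesis .
  qed
  then have "(\<Sum>x\<leftarrow>xs. real d / (real d - x)) - (\<Sum>x\<leftarrow>xs. (2 * real d - 2 - x) / (real d - x))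
      = (\<Sum>x\<leftarrow>xs. 2 * (1 / (real d - x)) - 1)"
    unfolding sum_list_subtractf[symmetric] by (intro arg_cong[where f = sum_list] map_cong) auto
  also have "(\<Sum>x\<leftarrow>ys. 2 * (1 / (real d - x)) - 1) = 2 * (\<Sum>x\<leftarrow>ys. 1 / (real d - x)) - length ys"
    for ys by (induction ys) auto
  also have "real (length xs) = real n - 1" using assms(1) by auto
  finally have "(\<Sum>x\<leftarrow>xs. real d / (real d - x)) - (\<Sum>x\<leftarrow>xs. (2 * real d - 2 - x) / (real d - x))
      = 2 * (\<Sum>x\<leftarrow>xs. 1 / (real d - x)) - (real n - 1)" .
  moreover have "real n * (real d - 1) - real n * (real d - 1)\<^sup>2 / real d - (real d - 1) / (real d - 2)
      = real n - real n / real d - 1 / (real d - 2) - 1"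
    using assms(2) by (simp add: field_simps power2_eq_square)
  ultimately show ?thesis by simp
qed

section \<open>Regular graphs and their arc matrices\<close>

lemma graph_iso_K33I:
  fixes V :: "'a set" and P :: "'a set"
  assumes "finite V" "card V = 6" "P \<subseteq> V" "card P = 3"
    and bipartite: "\<And>u w. u \<in> V \<Longrightarrow> w \<in> V \<Longrightarrow> E u w \<longleftrightarrow> (u \<in> P) \<noteq> (w \<in> P)"
  shows "graph_iso V E K33_V K33_E"
proof -
  have "finite P" using assms(1,3) finite_subset by blast
  then have "finite (V - P)" "card (V - P) = 3"
    using assms(1-4) by (auto simp: card_Diff_subset)
  obtain h1 :: "'a \<Rightarrow> nat" where h1: "bij_betw h1 P {0..<3}"
    using ex_bij_betw_finite_nat[OF \<open>finite P\<close>] assms(4) by auto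
  obtain h2 :: "'a \<Rightarrow> nat" where h2: "bij_betw h2 (V - P) {0..<3}"
    using ex_bij_betw_finite_nat[OF \<open>finite (V - P)\<close>] \<open>card (V - P) = 3\<close> by auto
  define f where "f x = (if x \<in> P then h1 x else 3 + h2 x)" for x
  have "bij_betw f P {0..<3}"
    using h1 by (rule bij_betw_cong[THEN iffD1, rotated]) (simp add: f_def)
  moreover have "bij_betw f (V - P) {3..<6}"
  proof -
    have "bij_betw ((+) 3 \<circ> h2) (V - P) ((+) 3 ` {0..<3})"
      by (rule bij_betw_trans[OF h2]) (simp add: bij_betw_def inj_on_def)
    moreover have "(+) 3 ` {0..<3::nat} = {3..<6}" by (auto simp: image_iff)
    ultimately have "bij_betw ((+) 3 \<circ> h2) (V - P) {3..<6}" by simp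
    then show ?thesis by (rule bij_betw_cong[THEN iffD1, rotated]) (simp add: f_def)
  qed
  ultimately have "bij_betw f (P \<union> (V - P)) ({0..<3} \<union> {3..<6})"
    by (rule bij_betw_combine) auto
  moreover have "P \<union> (V - P) = V" "{0..<3} \<union> {3..<6::nat} = {0..<6}" using assms(3) by auto
  ultimately have bij: "bij_betw f V {0..<6}" by simp
  have side: "f x < 3 \<longleftrightarrow> x \<in> P" if "x \<in> V" for x
    using that h1 h2 unfolding f_def bij_betw_def by auto
  have "E u w \<longleftrightarrow> K33_E (f u) (f w)" if "u \<in> V" "w \<in> V" for u w
    using bipartite[OF that] side[OF that(1)] side[OF that(2)] bij that
    unfolding K33_E_def bij_betw_def by auto
  then show ?thesis unfolding graph_iso_def K33_V_def using bij by auto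
qed

locale regular_graph =
  fixes V :: "'a::linorder set" and E :: "'a \<Rightarrow> 'a \<Rightarrow> bool" and d :: nat
  assumes simple: "simple_graph V E" and regular: "regular V E d"
begin

definition "vs = sorted_list_of_set V"

definition "nV = card V"

definition "as = arc_list V E"

definition "nA = length as"

definition "nE = card {p \<in> arcs V E. fst p < snd p}"

lemma finite_V: "finite V" using simple unfolding simple_graph_def by auto

lemma adj_in_V: "E u v \<Longrightarrow> u \<in> V \<and> v \<in> V" using simple unfolding simple_graph_def by auto

lemma adj_sym: "E u v \<Longrightarrow> E v u" using simple unfolding simple_graph_def by auto

lemma adj_irrefl: "\<not> E u u" using simple unfolding simple_graph_def by auto

lemma card_neighbours: "v \<in> V \<Longrightarrow> card {w\<in>V. E v w} = d"
  using regular unfolding regular_def deg_def by auto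

lemma deg_eq: "v \<in> V \<Longrightarrow> deg V E v = d" using regular unfolding regular_def by auto

lemma vs: "distinct vs" "set vs = V" "length vs = nV"
  using finite_V unfolding vs_def nV_def by auto

lemma finite_arcs: "finite (arcs V E)"
proof -
  have "arcs V E \<subseteq> V \<times> V" unfolding arcs_def by auto
  then show ?thesis using finite_V finite_subset by blast
qed

lemma as: "distinct as" "set as = arcs V E" "length as = nA"
  using finite_arcs unfolding as_def arc_list_def nA_def by auto

lemma arcs_iff: "p \<in> arcs V E \<longleftrightarrow> E (fst p) (snd p)"
  unfolding arcs_def using adj_in_V by (cases p) auto

lemma sum_vertices: "(\<Sum>k=0..<nV. g (vs ! k)) = (\<Sum>x\<in>V. g x)"
proof -
  have "bij_betw ((!) vs) {0..<nV} V" using vs by (intro bij_betw_nth) auto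
  then show ?thesis by (rule sum.reindex_bij_betw)
qed

lemma sum_arcs: "(\<Sum>k=0..<nA. g (as ! k)) = (\<Sum>x\<in>arcs V E. g x)"
proof -
  have "bij_betw ((!) as) {0..<nA} (arcs V E)" using as by (intro bij_betw_nth) auto
  then show ?thesis by (rule sum.reindex_bij_betw)
qed

lemma nth_vs_in_V: "i < nV \<Longrightarrow> vs ! i \<in> V" using vs by (metis nth_mem)

lemma nth_vs_eq_iff: "i < nV \<Longrightarrow> j < nV \<Longrightarrow> vs ! i = vs ! j \<longleftrightarrow> i = j"
  using vs by (simp add: nth_eq_iff_index_eq)

lemma nth_as_adj: "i < nA \<Longrightarrow> E (fst (as ! i)) (snd (as ! i))"
  using as arcs_iff by (metis nth_mem)

lemma nth_as_eq_iff: "i < nA \<Longrightarrow> j < nA \<Longrightarrow> as ! i = as ! j \<longleftrightarrow> i = j"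
  using as by (simp add: nth_eq_iff_index_eq)

lemma card_arcs: "card (arcs V E) = nV * d"
proof -
  have "arcs V E = Sigma V (\<lambda>u. {w\<in>V. E u w})" unfolding arcs_def by auto
  then have "card (arcs V E) = (\<Sum>u\<in>V. card {w\<in>V. E u w})"
    using finite_V by (simp add: card_SigmaI)
  also have "\<dots> = (\<Sum>u\<in>V. d)" using card_neighbours by simp
  finally show ?thesis unfolding nV_def by simp
qed

lemma nA_eq: "nA = nV * d" using as card_arcs by (metis distinct_card)

lemma nA_eq_twice_nE: "nA = 2 * nE"
proof -
  let ?F = "{p\<in>arcs V E. fst p < snd p}"
  have U: "arcs V E = ?F \<union> prod.swap ` ?F"
  proof (intro equalityI subsetI)
    fix p assume p: "p \<in> arcs V E"
    then have "fst p \<noteq> snd p" using arcs_iff adj_irrefl by metis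
    then have "fst p < snd p \<or> snd p < fst p" by auto
    then show "p \<in> ?F \<union> prod.swap ` ?F"
    proof
      assume "snd p < fst p"
      then have "prod.swap p \<in> ?F" using p arcs_iff adj_sym by auto
      then have "prod.swap (prod.swap p) \<in> prod.swap ` ?F" by blast
      then show ?thesis by simp
    qed (use p in auto)
  next
    fix p assume "p \<in> ?F \<union> prod.swap ` ?F"
    then show "p \<in> arcs V E" using arcs_iff adj_sym by fastforce
  qed
  have D: "?F \<inter> prod.swap ` ?F = {}" by auto
  have C: "card (prod.swap ` ?F) = card ?F" by (rule card_image) (simp add: inj_on_def)
  have fF: "finite ?F" using finite_arcs by auto
  have "card (arcs V E) = card (?F \<union> prod.swap ` ?F)" using U by (rule arg_cong)
  also have "\<dots> = card ?F + card (prod.swap ` ?F)" using D fF by (intro card_Un_disjoint) auto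
  finally have "card (arcs V E) = 2 * card ?F" using C by simp
  then show ?thesis unfolding nE_def using as by (metis distinct_card)
qed

lemma nV_le_nE:
  assumes "2 \<le> d" shows "nV \<le> nE"
proof -
  have "nV * 2 \<le> nV * d" using assms by simp
  then show ?thesis using nA_eq_twice_nE nA_eq by linarith
qed

lemma nV_le_nA: "1 \<le> d \<Longrightarrow> nV \<le> nA"
  using nA_eq by simp

text \<open>S = tail_mat and T = head_mat are the tail and head incidence matrices of the arcs and
  J = rev_mat reverses arcs, so that T S^T is d times the edge walk and nb_mat = T S^T - J
  is the non-backtracking (Hashimoto) matrix.\<close>

definition "adjacency_mat = mat nV nV (\<lambda>(i, j). if E (vs ! i) (vs ! j) then 1 else 0 :: complex)"

definition "tail_mat = mat nA nV (\<lambda>(a, i). if fst (as ! a) = vs ! i then 1 else 0 :: complex)"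

definition "head_mat = mat nA nV (\<lambda>(a, i). if snd (as ! a) = vs ! i then 1 else 0 :: complex)"

definition "rev_mat = mat nA nA (\<lambda>(a, b). if as ! b = prod.swap (as ! a) then 1 else 0 :: complex)"

definition "arc_sign a = (if fst (as ! a) < snd (as ! a) then 1 else -1 :: complex)"

definition "sign_mat = mat nA nA (\<lambda>(a, b). if a = b then arc_sign a else 0)"

definition "nb_mat = head_mat * transpose_mat tail_mat - rev_mat"

lemma carriers[simp]: "adjacency_mat \<in> carrier_mat nV nV" "tail_mat \<in> carrier_mat nA nV"
  "head_mat \<in> carrier_mat nA nV" "rev_mat \<in> carrier_mat nA nA" "sign_mat \<in> carrier_mat nA nA"
  "nb_mat \<in> carrier_mat nA nA"
  by (auto simp: adjacency_mat_def tail_mat_def head_mat_def rev_mat_def sign_mat_def nb_mat_def)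

lemma dims[simp]: "dim_row adjacency_mat = nV" "dim_col adjacency_mat = nV" "dim_row tail_mat = nA"
  "dim_col tail_mat = nV" "dim_row head_mat = nA" "dim_col head_mat = nV" "dim_row rev_mat = nA"
  "dim_col rev_mat = nA" "dim_row sign_mat = nA" "dim_col sign_mat = nA"
  "dim_row nb_mat = nA" "dim_col nb_mat = nA"
  by (auto simp: adjacency_mat_def tail_mat_def head_mat_def rev_mat_def sign_mat_def nb_mat_def)

lemma sum_vertices_delta:
  assumes "y \<in> V"
  shows "(\<Sum>x\<in>V. (if y = x then 1 else 0) * (if z = x then 1 else 0 :: complex))
      = (if z = y then 1 else 0)"
proof -
  have "(\<Sum>x\<in>V. (if y = x then 1 else 0) * (if z = x then 1 else 0 :: complex))
      = (\<Sum>x\<in>V. if x = y then (if z = y then 1 else 0) else 0)"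
    by (rule sum.cong) auto
  also have "\<dots> = (if z = y then 1 else 0)" using assms finite_V by simp
  finally show ?thesis .
qed

lemma sum_arcs_delta:
  assumes "q \<in> arcs V E"
  shows "(\<Sum>p\<in>arcs V E. (if p = q then 1 else 0) * f p) = (f q :: complex)"
proof -
  have "(\<Sum>p\<in>arcs V E. (if p = q then 1 else 0) * f p) = (\<Sum>p\<in>arcs V E. if p = q then f q else 0)"
    by (rule sum.cong) auto
  also have "\<dots> = f q" using assms finite_arcs by simp
  finally show ?thesis .
qed

lemma head_tail_transpose: "head_mat * transpose_mat tail_mat
    = mat nA nA (\<lambda>(a, b). if snd (as ! a) = fst (as ! b) then 1 else 0)"
proof (rule eq_matI)
  fix a b assume a: "a < dim_row (mat nA nA (\<lambda>(a, b). if snd (as ! a) = fst (as ! b) then 1 else 0 :: complex))"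
    and b: "b < dim_col (mat nA nA (\<lambda>(a, b). if snd (as ! a) = fst (as ! b) then 1 else 0 :: complex))"
  have "(head_mat * transpose_mat tail_mat) $$ (a, b)
      = (\<Sum>k=0..<nV. (if snd (as ! a) = vs ! k then 1 else 0) * (if fst (as ! b) = vs ! k then 1 else 0))"
    using a b by (simp add: head_mat_def tail_mat_def scalar_prod_def)
  also have "\<dots> = (\<Sum>x\<in>V. (if snd (as ! a) = x then 1 else 0) * (if fst (as ! b) = x then 1 else 0))"
    by (rule sum_vertices)
  also have "\<dots> = (if fst (as ! b) = snd (as ! a) then 1 else 0)"
    using a nth_as_adj adj_in_V by (intro sum_vertices_delta) auto
  finally show "(head_mat * transpose_mat tail_mat) $$ (a, b)
      = mat nA nA (\<lambda>(a, b). if snd (as ! a) = fst (as ! b) then 1 else 0 :: complex) $$ (a, b)"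
    using a b by auto
qed (auto simp: head_mat_def tail_mat_def)

lemma tail_transpose_head: "transpose_mat tail_mat * head_mat = adjacency_mat"
proof (rule eq_matI)
  fix i j assume i: "i < dim_row adjacency_mat" and j: "j < dim_col adjacency_mat"
  have "(transpose_mat tail_mat * head_mat) $$ (i, j)
      = (\<Sum>k=0..<nA. (if fst (as ! k) = vs ! i then 1 else 0) * (if snd (as ! k) = vs ! j then 1 else 0))"
    using i j by (simp add: head_mat_def tail_mat_def adjacency_mat_def scalar_prod_def)
  also have "\<dots> = (\<Sum>p\<in>arcs V E. (if fst p = vs ! i then 1 else 0) * (if snd p = vs ! j then 1 else 0))"
    by (rule sum_arcs)
  also have "\<dots> = (\<Sum>p\<in>arcs V E. if p = (vs ! i, vs ! j) then 1 else 0)"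
    by (rule sum.cong) (auto simp: prod_eq_iff)
  also have "\<dots> = (if E (vs ! i) (vs ! j) then 1 else 0)"
    using finite_arcs arcs_iff[of "(vs ! i, vs ! j)"] by simp
  finally show "(transpose_mat tail_mat * head_mat) $$ (i, j)
      = adjacency_mat $$ (i, j)" using i j by (simp add: adjacency_mat_def)
qed (auto simp: adjacency_mat_def tail_mat_def head_mat_def)

lemma tail_transpose_rev: "transpose_mat tail_mat * rev_mat = transpose_mat head_mat"
proof (rule eq_matI)
  fix i b assume i: "i < dim_row (transpose_mat head_mat)"
    and b: "b < dim_col (transpose_mat head_mat)"
  then have i': "i < nV" and b': "b < nA" by (auto simp: head_mat_def)
  have sw: "prod.swap (as ! b) \<in> arcs V E" using nth_as_adj[OF b'] adj_sym arcs_iff by auto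
  have "(transpose_mat tail_mat * rev_mat) $$ (i, b)
      = (\<Sum>k=0..<nA. (if fst (as ! k) = vs ! i then 1 else 0) * (if as ! b = prod.swap (as ! k) then 1 else 0))"
    using i' b' by (simp add: rev_mat_def tail_mat_def scalar_prod_def)
  also have "\<dots> = (\<Sum>p\<in>arcs V E. (if fst p = vs ! i then 1 else 0) * (if as ! b = prod.swap p then 1 else 0))"
    by (rule sum_arcs)
  also have "\<dots> = (\<Sum>p\<in>arcs V E. (if p = prod.swap (as ! b) then 1 else 0) * (if fst p = vs ! i then 1 else 0))"
    by (rule sum.cong) auto
  also have "\<dots> = (if fst (prod.swap (as ! b)) = vs ! i then 1 else 0)"
    by (rule sum_arcs_delta[OF sw])
  finally show "(transpose_mat tail_mat * rev_mat) $$ (i, b)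
      = transpose_mat head_mat $$ (i, b)" using i' b' by (simp add: head_mat_def)
qed (auto simp: rev_mat_def tail_mat_def head_mat_def)

lemma card_arcs_into: "v \<in> V \<Longrightarrow> card {p\<in>arcs V E. snd p = v} = d"
proof -
  assume v: "v \<in> V"
  have "{p\<in>arcs V E. snd p = v} = (\<lambda>u. (u,v)) ` {u\<in>V. E v u}"
    using arcs_iff adj_in_V adj_sym by auto
  also have "card \<dots> = card {u\<in>V. E v u}" by (rule card_image) (simp add: inj_on_def)
  finally show ?thesis using card_neighbours[OF v] by simp
qed

lemma head_transpose_head: "transpose_mat head_mat * head_mat = of_nat d \<cdot>\<^sub>m 1\<^sub>m nV"
proof (rule eq_matI)
  fix i j assume i: "i < dim_row (of_nat d \<cdot>\<^sub>m 1\<^sub>m nV :: complex mat)"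
    and j: "j < dim_col (of_nat d \<cdot>\<^sub>m 1\<^sub>m nV :: complex mat)"
  then have i': "i < nV" and j': "j < nV" by auto
  have "(transpose_mat head_mat * head_mat) $$ (i, j)
      = (\<Sum>k=0..<nA. (if snd (as ! k) = vs ! i then 1 else 0) * (if snd (as ! k) = vs ! j then 1 else 0))"
    using i' j' by (simp add: head_mat_def scalar_prod_def)
  also have "\<dots> = (\<Sum>p\<in>arcs V E. (if snd p = vs ! i then 1 else 0) * (if snd p = vs ! j then 1 else 0))"
    by (rule sum_arcs)
  also have "\<dots> = (\<Sum>p\<in>arcs V E. if i = j \<and> snd p = vs ! i then 1 else 0)"
    by (rule sum.cong) (use nth_vs_eq_iff i' j' in auto)
  also have "\<dots> = (if i = j then of_nat d else 0)"
  proof (cases "i = j")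
    case True
    have "(\<Sum>p\<in>arcs V E. if i = j \<and> snd p = vs ! i then 1 else 0 :: complex)
        = of_nat (card {p\<in>arcs V E. snd p = vs ! i})"
      using True finite_arcs by (simp add: sum.If_cases Int_def)
    also have "\<dots> = of_nat d" using card_arcs_into nth_vs_in_V i' by simp
    finally show ?thesis using True by simp
  qed simp
  finally show "(transpose_mat head_mat * head_mat) $$ (i, j)
      = (of_nat d \<cdot>\<^sub>m 1\<^sub>m nV) $$ (i, j)" using i' j' by simp
qed (auto simp: head_mat_def)

lemma rev_mat_square: "rev_mat * rev_mat = 1\<^sub>m nA"
proof (rule eq_matI)
  fix a c assume a: "a < dim_row (1\<^sub>m nA :: complex mat)"
    and c: "c < dim_col (1\<^sub>m nA :: complex mat)"
  then have a': "a < nA" and c': "c < nA" by auto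
  have sw: "prod.swap (as ! a) \<in> arcs V E" using nth_as_adj[OF a'] adj_sym arcs_iff by auto
  have "(rev_mat * rev_mat) $$ (a, c)
      = (\<Sum>k=0..<nA. (if as ! k = prod.swap (as ! a) then 1 else 0) * (if as ! c = prod.swap (as ! k) then 1 else 0))"
    using a' c' by (simp add: rev_mat_def scalar_prod_def)
  also have "\<dots> = (\<Sum>p\<in>arcs V E. (if p = prod.swap (as ! a) then 1 else 0) * (if as ! c = prod.swap p then 1 else 0))"
    by (rule sum_arcs)
  also have "\<dots> = (if as ! c = prod.swap (prod.swap (as ! a)) then 1 else 0)"
    by (rule sum_arcs_delta[OF sw])
  also have "\<dots> = (if c = a then 1 else 0)" using nth_as_eq_iff a' c' by simp
  finally show "(rev_mat * rev_mat) $$ (a, c) = 1\<^sub>m nA $$ (a, c)" using a' c' by auto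
qed (auto simp: rev_mat_def)

lemma sign_mat_mult_left: "X \<in> carrier_mat nA k \<Longrightarrow> a < nA \<Longrightarrow> b < k \<Longrightarrow> (sign_mat * X) $$ (a, b)
    = arc_sign a * X $$ (a, b)"
proof -
  assume X: "X \<in> carrier_mat nA k" and a: "a < nA" and b: "b < k"
  have "(sign_mat * X) $$ (a, b) = (\<Sum>j=0..<nA. (if a = j then arc_sign a else 0) * X $$ (j, b))"
    using X a b by (simp add: sign_mat_def scalar_prod_def)
  also have "\<dots> = (\<Sum>j=0..<nA. if j = a then arc_sign a * X $$ (a, b) else 0)"
    by (rule sum.cong) auto
  also have "\<dots> = arc_sign a * X $$ (a, b)" using a by simp
  finally show ?thesis .
qed

lemma sign_mat_mult_right: "X \<in> carrier_mat k nA \<Longrightarrow> a < k \<Longrightarrow> b < nA \<Longrightarrow> (X * sign_mat) $$ (a, b)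
    = X $$ (a, b) * arc_sign b"
proof -
  assume X: "X \<in> carrier_mat k nA" and a: "a < k" and b: "b < nA"
  have "(X * sign_mat) $$ (a, b) = (\<Sum>j=0..<nA. X $$ (a, j) * (if j = b then arc_sign j else 0))"
    using X a b by (simp add: sign_mat_def scalar_prod_def)
  also have "\<dots> = (\<Sum>j=0..<nA. if j = b then X $$ (a, b) * arc_sign b else 0)"
    by (rule sum.cong) auto
  also have "\<dots> = X $$ (a, b) * arc_sign b" using b by simp
  finally show ?thesis .
qed

lemma arc_sign_square: "a < nA \<Longrightarrow> arc_sign a * arc_sign a = 1" by (simp add: arc_sign_def)

lemma sign_mat_conj:
  assumes "M \<in> carrier_mat nA nA" "a < nA" "b < nA"
  shows "(sign_mat * M * sign_mat) $$ (a, b) = arc_sign a * M $$ (a, b) * arc_sign b"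
proof -
  have "(sign_mat * M * sign_mat) $$ (a, b) = (sign_mat * M) $$ (a, b) * arc_sign b"
    using assms by (intro sign_mat_mult_right[of _ nA]) auto
  also have "(sign_mat * M) $$ (a, b) = arc_sign a * M $$ (a, b)"
    using assms by (intro sign_mat_mult_left) auto
  finally show ?thesis .
qed

lemma sign_mat_square: "sign_mat * sign_mat = 1\<^sub>m nA"
proof (rule eq_matI)
  fix a b assume "a < dim_row (1\<^sub>m nA :: complex mat)" "b < dim_col (1\<^sub>m nA :: complex mat)"
  then have "a < nA" "b < nA" by auto
  moreover from this have "(sign_mat * sign_mat) $$ (a, b) = arc_sign a * sign_mat $$ (a, b)"
    by (intro sign_mat_mult_left) auto
  ultimately show "(sign_mat * sign_mat) $$ (a, b) = 1\<^sub>m nA $$ (a, b)"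
    by (simp add: sign_mat_def arc_sign_square)
qed auto

lemma arc_sign_rev:
  assumes a: "a < nA" and b: "b < nA"
  shows "arc_sign a * rev_mat $$ (a, b) * arc_sign b = - rev_mat $$ (a, b)"
proof (cases "as ! b = prod.swap (as ! a)")
  case True
  have "fst (as ! a) \<noteq> snd (as ! a)" using nth_as_adj[OF a] adj_irrefl by metis
  then have "arc_sign b = - arc_sign a" unfolding arc_sign_def using True by (cases "as ! a") auto
  then show ?thesis using True a b arc_sign_square[OF a] by (simp add: rev_mat_def)
qed (use a b in \<open>simp add: rev_mat_def\<close>)

section \<open>The characteristic polynomials of the two walks\<close>

lemma arc_matrix_eq: "arc_matrix V E p = mat nA nA (\<lambda>(i, j). complex_of_real (p (as ! i) (as ! j)))"
  by (simp add: arc_matrix_def as_def nA_def Let_def)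

lemma snd_nth_as_in_V: "a < nA \<Longrightarrow> snd (as ! a) \<in> V"
  using nth_as_adj adj_in_V by blast

lemma arc_matrix_edge_trans: "arc_matrix V E (edge_trans V E)
    = (1 / of_nat d) \<cdot>\<^sub>m (head_mat * transpose_mat tail_mat)"
proof (rule eq_matI)
  fix a b assume a: "a < dim_row ((1 / of_nat d) \<cdot>\<^sub>m (head_mat * transpose_mat tail_mat))"
    and b: "b < dim_col ((1 / of_nat d) \<cdot>\<^sub>m (head_mat * transpose_mat tail_mat))"
  then have a': "a < nA" and b': "b < nA" by auto
  have Eb: "E (fst (as ! b)) (snd (as ! b))" by (rule nth_as_adj[OF b'])
  have dg: "deg V E (snd (as ! a)) = d" using snd_nth_as_in_V[OF a'] deg_eq by blast
  show "arc_matrix V E (edge_trans V E) $$ (a, b)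
      = ((1 / of_nat d) \<cdot>\<^sub>m (head_mat * transpose_mat tail_mat)) $$ (a, b)"
    unfolding arc_matrix_eq head_tail_transpose using a' b' Eb dg
    by (cases "snd (as ! a) = fst (as ! b)") (auto simp: edge_trans_def)
qed (auto simp: arc_matrix_eq)

lemma arc_matrix_nb_trans: "arc_matrix V E (nb_trans V E) = (1 / (of_nat d - 1)) \<cdot>\<^sub>m nb_mat"
proof (rule eq_matI)
  fix a b assume a: "a < dim_row ((1 / (of_nat d - 1)) \<cdot>\<^sub>m nb_mat)"
    and b: "b < dim_col ((1 / (of_nat d - 1)) \<cdot>\<^sub>m nb_mat)"
  then have a': "a < nA" and b': "b < nA" by auto
  have Eb: "E (fst (as ! b)) (snd (as ! b))" by (rule nth_as_adj[OF b'])
  have dg: "deg V E (snd (as ! a)) = d" using snd_nth_as_in_V[OF a'] deg_eq by blast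
  have Bab: "nb_mat $$ (a, b)
      = (if snd (as ! a) = fst (as ! b) then 1 else 0) - (if as ! b = prod.swap (as ! a) then 1 else 0)"
    unfolding nb_mat_def using a' b' by (simp add: head_tail_transpose rev_mat_def)
  have sw: "as ! b = prod.swap (as ! a) \<longleftrightarrow> snd (as ! a) = fst (as ! b) \<and> snd (as ! b) = fst (as ! a)"
    by (cases "as ! a"; cases "as ! b") auto
  show "arc_matrix V E (nb_trans V E) $$ (a, b) = ((1 / (of_nat d - 1)) \<cdot>\<^sub>m nb_mat) $$ (a, b)"
    unfolding arc_matrix_eq using a' b' Eb dg
    by (cases "snd (as ! a) = fst (as ! b)"; cases "snd (as ! b) = fst (as ! a)")
      (auto simp: nb_trans_def Bab sw)
qed (auto simp: arc_matrix_eq)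

lemma char_poly_edge_walk:
  assumes "1 \<le> d" and es: "char_poly adjacency_mat = (\<Prod>a\<leftarrow>es. [:- a, 1:])"
  shows "char_poly (arc_matrix V E (edge_trans V E))
    = [:0, 1:] ^ (nA - nV) * (\<Prod>a\<leftarrow>es. [:- (a / of_nat d), 1:])"
proof (rule poly_eqI_cofinite[of "{0}"])
  fix x :: complex assume "x \<notin> {0}"
  have d: "(of_nat d :: complex) \<noteq> 0" using assms(1) by simp
  have P: "arc_matrix V E (edge_trans V E) = ((1 / of_nat d) \<cdot>\<^sub>m head_mat) * transpose_mat tail_mat"
    unfolding arc_matrix_edge_trans by (rule mult_smult_assoc_mat[symmetric]) auto
  have "poly (char_poly (arc_matrix V E (edge_trans V E))) x
      = det (x \<cdot>\<^sub>m 1\<^sub>m nA - ((1 / of_nat d) \<cdot>\<^sub>m head_mat) * transpose_mat tail_mat)"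
    unfolding P by (rule poly_char_poly_eq_det) auto
  also have "\<dots> = x ^ (nA - nV) * det (x \<cdot>\<^sub>m 1\<^sub>m nV - transpose_mat tail_mat * ((1 / of_nat d) \<cdot>\<^sub>m head_mat))"
    using \<open>x \<notin> {0}\<close> nV_le_nA[OF assms(1)] by (intro det_smult_one_minus_mult_comm) auto
  also have "transpose_mat tail_mat * ((1 / of_nat d) \<cdot>\<^sub>m head_mat)
      = (1 / of_nat d) \<cdot>\<^sub>m adjacency_mat"
    unfolding tail_transpose_head[symmetric] by (rule mult_smult_distrib) auto
  also have "det (x \<cdot>\<^sub>m 1\<^sub>m nV - (1 / of_nat d) \<cdot>\<^sub>m adjacency_mat) = (\<Prod>a\<leftarrow>es. x - 1 / of_nat d * a)"
    using d by (intro det_diff_smult_factorized[OF _ es]) auto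
  finally show "poly (char_poly (arc_matrix V E (edge_trans V E))) x
    = poly ([:0, 1:] ^ (nA - nV) * (\<Prod>a\<leftarrow>es. [:- (a / of_nat d), 1:])) x"
    by (simp add: poly_prod_list o_def)
qed simp

text \<open>Conjugation by the diagonal matrix of arc signs turns J into -J.\<close>
lemma det_smult_one_plus_rev: "det (y \<cdot>\<^sub>m 1\<^sub>m nA + rev_mat) = det (y \<cdot>\<^sub>m 1\<^sub>m nA - rev_mat)"
proof -
  have M: "y \<cdot>\<^sub>m 1\<^sub>m nA - rev_mat \<in> carrier_mat nA nA" by (rule minus_carrier_mat) simp
  have "sign_mat * (y \<cdot>\<^sub>m 1\<^sub>m nA - rev_mat) * sign_mat = y \<cdot>\<^sub>m 1\<^sub>m nA + rev_mat"
  proof (rule eq_matI)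
    fix a b assume "a < dim_row (y \<cdot>\<^sub>m 1\<^sub>m nA + rev_mat)" "b < dim_col (y \<cdot>\<^sub>m 1\<^sub>m nA + rev_mat)"
    then have a: "a < nA" and b: "b < nA" by auto
    have "(sign_mat * (y \<cdot>\<^sub>m 1\<^sub>m nA - rev_mat) * sign_mat) $$ (a, b)
        = (if a = b then y * (arc_sign a * arc_sign a) else 0) - arc_sign a * rev_mat $$ (a, b) * arc_sign b"
      using a b by (auto simp: sign_mat_conj[OF M a b] algebra_simps)
    then show "(sign_mat * (y \<cdot>\<^sub>m 1\<^sub>m nA - rev_mat) * sign_mat) $$ (a, b)
        = (y \<cdot>\<^sub>m 1\<^sub>m nA + rev_mat) $$ (a, b)"
      using a b arc_sign_rev[OF a b] arc_sign_square[OF a] by auto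
  qed (use M in auto)
  then have "det (y \<cdot>\<^sub>m 1\<^sub>m nA + rev_mat)
      = det sign_mat * det (y \<cdot>\<^sub>m 1\<^sub>m nA - rev_mat) * det sign_mat"
    using det_mult[OF mult_carrier_mat[OF carriers(5) M] carriers(5)] det_mult[OF carriers(5) M] by simp
  moreover have "det sign_mat * det sign_mat = 1"
    using det_mult[of sign_mat nA sign_mat] sign_mat_square by simp
  ultimately show ?thesis by (simp add: algebra_simps)
qed

lemma smult_one_minus_rev_mult_plus: "(y \<cdot>\<^sub>m 1\<^sub>m nA - rev_mat) * (y \<cdot>\<^sub>m 1\<^sub>m nA + rev_mat)
    = (y\<^sup>2 - 1) \<cdot>\<^sub>m 1\<^sub>m nA"
proof -
  have c1: "y \<cdot>\<^sub>m 1\<^sub>m nA \<in> carrier_mat nA nA" by simp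
  have c2: "y \<cdot>\<^sub>m 1\<^sub>m nA + rev_mat \<in> carrier_mat nA nA" by simp
  have "(y \<cdot>\<^sub>m 1\<^sub>m nA - rev_mat) * (y \<cdot>\<^sub>m 1\<^sub>m nA + rev_mat)
      = (y \<cdot>\<^sub>m 1\<^sub>m nA) * (y \<cdot>\<^sub>m 1\<^sub>m nA + rev_mat) - rev_mat * (y \<cdot>\<^sub>m 1\<^sub>m nA + rev_mat)"
    by (rule minus_mult_distrib_mat[OF c1 carriers(4) c2])
  also have "(y \<cdot>\<^sub>m 1\<^sub>m nA) * (y \<cdot>\<^sub>m 1\<^sub>m nA + rev_mat) = y \<cdot>\<^sub>m (y \<cdot>\<^sub>m 1\<^sub>m nA + rev_mat)"
    by (subst mult_smult_assoc_mat[OF one_carrier_mat c2]) (use c2 in simp)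
  also have "rev_mat * (y \<cdot>\<^sub>m 1\<^sub>m nA + rev_mat) = rev_mat * (y \<cdot>\<^sub>m 1\<^sub>m nA) + rev_mat * rev_mat"
    by (rule mult_add_distrib_mat[OF carriers(4) c1 carriers(4)])
  also have "rev_mat * (y \<cdot>\<^sub>m 1\<^sub>m nA) = y \<cdot>\<^sub>m rev_mat"
    by (subst mult_smult_distrib[OF carriers(4) one_carrier_mat]) simp
  also have "y \<cdot>\<^sub>m (y \<cdot>\<^sub>m 1\<^sub>m nA + rev_mat) - (y \<cdot>\<^sub>m rev_mat + rev_mat * rev_mat)
      = (y\<^sup>2 - 1) \<cdot>\<^sub>m 1\<^sub>m nA"
    unfolding rev_mat_square by (rule eq_matI) (auto simp: power2_eq_square algebra_simps)
  finally show ?thesis .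
qed

lemma char_poly_rev_mat: "char_poly rev_mat = [:- 1, 0, 1:] ^ nE"
proof -
  define p where "p = char_poly rev_mat"
  define q where "q = ([:- 1, 0, 1:] :: complex poly) ^ nE"
  have "p\<^sup>2 = q\<^sup>2"
  proof (rule poly_eqI_cofinite[of "{}"])
    fix y :: complex
    have "poly (p\<^sup>2) y = det (y \<cdot>\<^sub>m 1\<^sub>m nA - rev_mat) * det (y \<cdot>\<^sub>m 1\<^sub>m nA + rev_mat)"
      unfolding p_def det_smult_one_plus_rev
      by (simp add: poly_char_poly_eq_det[of rev_mat nA] power2_eq_square)
    also have "\<dots> = det ((y \<cdot>\<^sub>m 1\<^sub>m nA - rev_mat) * (y \<cdot>\<^sub>m 1\<^sub>m nA + rev_mat))"
      by (rule det_mult[symmetric, of _ nA]) auto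
    also have "\<dots> = (y\<^sup>2 - 1) ^ (2 * nE)"
      unfolding smult_one_minus_rev_mult_plus nA_eq_twice_nE[symmetric] by simp
    also have "\<dots> = ((y\<^sup>2 - 1) ^ nE)\<^sup>2"
      by (metis power_mult mult.commute)
    also have "\<dots> = poly (q\<^sup>2) y"
      unfolding q_def poly_power by (simp add: power2_eq_square[of y])
    finally show "poly (p\<^sup>2) y = poly (q\<^sup>2) y" .
  qed simp
  then have "(p - q) * (p + q) = 0" by (simp add: power2_eq_square algebra_simps)
  moreover have "p + q \<noteq> 0"
  proof
    assume "p + q = 0"
    have "coeff p nA = 1" unfolding p_def using degree_monic_char_poly[of rev_mat nA] by simp
    moreover have "degree q = nA"
      unfolding q_def nA_eq_twice_nE by (simp add: degree_power_eq)
    moreover have "lead_coeff q = 1"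
      unfolding q_def lead_coeff_power by simp
    ultimately have "coeff q nA = 1" by simp
    with \<open>p + q = 0\<close> \<open>coeff p nA = 1\<close> show False by (metis coeff_add coeff_0 one_add_one zero_neq_numeral)
  qed
  ultimately show ?thesis unfolding p_def q_def by simp
qed

text \<open>The Ihara-Bass identity: multiplying y - B by y - J, whose determinant is (y^2 - 1)^m,
  leaves (y^2 - 1) - (y - J) T S^T, to which Sylvester's identity applies.\<close>
lemma poly_char_poly_nb_mat:
  assumes "2 \<le> d" and "y\<^sup>2 \<noteq> 1"
  shows "poly (char_poly nb_mat) y
    = (y\<^sup>2 - 1) ^ (nE - nV) * det ((y\<^sup>2 + of_nat d - 1) \<cdot>\<^sub>m 1\<^sub>m nV - y \<cdot>\<^sub>m adjacency_mat)"
proof -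
  define J' where "J' = y \<cdot>\<^sub>m 1\<^sub>m nA - rev_mat"
  have J': "J' \<in> carrier_mat nA nA" unfolding J'_def by (rule minus_carrier_mat) simp
  have J'H: "J' * head_mat \<in> carrier_mat nA nV" using J' by simp
  have HS: "head_mat * transpose_mat tail_mat \<in> carrier_mat nA nA"
    by (rule mult_carrier_mat[of _ nA nV]) auto
  have z: "y\<^sup>2 - 1 \<noteq> 0" using assms(2) by simp
  have "J' * (y \<cdot>\<^sub>m 1\<^sub>m nA - nb_mat)
      = J' * (y \<cdot>\<^sub>m 1\<^sub>m nA + rev_mat) - J' * (head_mat * transpose_mat tail_mat)"
    unfolding nb_mat_def using J' HS
    by (subst mult_minus_distrib_mat[symmetric, of _ nA nA]) (auto intro!: arg_cong2[where f = "(*)"] eq_matI)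
  also have "J' * (head_mat * transpose_mat tail_mat) = (J' * head_mat) * transpose_mat tail_mat"
    using J' by (intro assoc_mult_mat[symmetric, of _ nA nA _ nV _ nA]) auto
  finally have left: "J' * (y \<cdot>\<^sub>m 1\<^sub>m nA - nb_mat)
      = (y\<^sup>2 - 1) \<cdot>\<^sub>m 1\<^sub>m nA - (J' * head_mat) * transpose_mat tail_mat"
    unfolding J'_def smult_one_minus_rev_mult_plus .
  have "transpose_mat tail_mat * (J' * head_mat) = (transpose_mat tail_mat * J') * head_mat"
    using J' by (intro assoc_mult_mat[symmetric, of _ nV nA _ nA _ nV]) auto
  also have "transpose_mat tail_mat * J'
      = y \<cdot>\<^sub>m transpose_mat tail_mat - transpose_mat tail_mat * rev_mat"
    unfolding J'_def
    by (subst mult_minus_distrib_mat[of _ nV nA]) (auto simp: mult_smult_distrib[of _ nV nA])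
  also have "(y \<cdot>\<^sub>m transpose_mat tail_mat - transpose_mat tail_mat * rev_mat) * head_mat
      = y \<cdot>\<^sub>m adjacency_mat - of_nat d \<cdot>\<^sub>m 1\<^sub>m nV"
    by (subst minus_mult_distrib_mat[of _ nV nA])
      (auto simp: tail_transpose_head[symmetric] tail_transpose_rev head_transpose_head)
  finally have right: "transpose_mat tail_mat * (J' * head_mat)
      = y \<cdot>\<^sub>m adjacency_mat - of_nat d \<cdot>\<^sub>m 1\<^sub>m nV" .
  have "det J' * det (y \<cdot>\<^sub>m 1\<^sub>m nA - nb_mat) = det (J' * (y \<cdot>\<^sub>m 1\<^sub>m nA - nb_mat))"
    by (rule det_mult[symmetric, OF J']) (rule minus_carrier_mat, simp)
  also have "\<dots> = (y\<^sup>2 - 1) ^ (nA - nV) * det ((y\<^sup>2 - 1) \<cdot>\<^sub>m 1\<^sub>m nV - transpose_mat tail_mat * (J' * head_mat))"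
    unfolding left using nV_le_nA assms(1) by (intro det_smult_one_minus_mult_comm[OF J'H _ z]) auto
  also have "(y\<^sup>2 - 1) \<cdot>\<^sub>m 1\<^sub>m nV - transpose_mat tail_mat * (J' * head_mat)
      = (y\<^sup>2 + of_nat d - 1) \<cdot>\<^sub>m 1\<^sub>m nV - y \<cdot>\<^sub>m adjacency_mat"
    unfolding right by (rule eq_matI) (auto simp: algebra_simps)
  also have "nA - nV = nE + (nE - nV)"
    using nA_eq_twice_nE nV_le_nE[OF assms(1)] by simp
  moreover have "det J' = (y\<^sup>2 - 1) ^ nE"
    using poly_char_poly_eq_det[of rev_mat nA y] unfolding J'_def char_poly_rev_mat
    by (simp add: power2_eq_square algebra_simps)
  ultimately show ?thesis
    using z poly_char_poly_eq_det[OF carriers(6), of y] by (simp add: power_add mult.assoc)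
qed

lemma char_poly_nb_walk:
  assumes "2 \<le> d" and es: "char_poly adjacency_mat = (\<Prod>a\<leftarrow>es. [:- a, 1:])"
  defines "c \<equiv> of_nat d - 1 :: complex"
  shows "char_poly (arc_matrix V E (nb_trans V E))
    = [:- (1 / c\<^sup>2), 0, 1:] ^ (nE - nV) * (\<Prod>a\<leftarrow>es. [:1 / c, - (a / c), 1:])"
proof (rule poly_eqI_cofinite[of "{0, 1 / c, - 1 / c}"])
  fix x :: complex assume x: "x \<notin> {0, 1 / c, - 1 / c}"
  have c: "c \<noteq> 0" unfolding c_def using assms(1) by simp
  define y where "y = c * x"
  have "y \<noteq> 0" using x c unfolding y_def by auto
  have "y\<^sup>2 \<noteq> 1"
  proof
    assume "y\<^sup>2 = 1"
    then have "y = 1 \<or> y = - 1" by (simp add: power2_eq_1_iff)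
    then show False using x c unfolding y_def by (auto simp: field_simps)
  qed
  have len: "length es = nV" by (rule length_char_poly_linear_factors[OF carriers(1) es])
  have "x \<cdot>\<^sub>m 1\<^sub>m nA - (1 / c) \<cdot>\<^sub>m nb_mat = (1 / c) \<cdot>\<^sub>m (y \<cdot>\<^sub>m 1\<^sub>m nA - nb_mat)"
    unfolding y_def using c by (intro eq_matI) (auto simp: field_simps)
  then have "poly (char_poly (arc_matrix V E (nb_trans V E))) x
      = (1 / c) ^ nA * det (y \<cdot>\<^sub>m 1\<^sub>m nA - nb_mat)"
    unfolding arc_matrix_nb_trans c_def[symmetric] by (subst poly_char_poly_eq_det[of _ nA]) auto
  also have "det (y \<cdot>\<^sub>m 1\<^sub>m nA - nb_mat) = poly (char_poly nb_mat) y"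
    by (rule poly_char_poly_eq_det[symmetric]) simp
  also have "\<dots> = (y\<^sup>2 - 1) ^ (nE - nV) * (\<Prod>a\<leftarrow>es. y\<^sup>2 + of_nat d - 1 - y * a)"
    using poly_char_poly_nb_mat[OF assms(1) \<open>y\<^sup>2 \<noteq> 1\<close>] det_diff_smult_factorized[OF carriers(1) es \<open>y \<noteq> 0\<close>]
    by simp
  also have "(\<Prod>a\<leftarrow>es. y\<^sup>2 + of_nat d - 1 - y * a) = (\<Prod>a\<leftarrow>es. c\<^sup>2 * (x\<^sup>2 - (a / c) * x + 1 / c))"
    unfolding y_def c_def using c[unfolded c_def]
    by (intro arg_cong[where f = prod_list] map_cong refl) (simp add: field_simps power2_eq_square)
  also have "\<dots> = (c\<^sup>2) ^ nV * (\<Prod>a\<leftarrow>es. x\<^sup>2 - (a / c) * x + 1 / c)"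
    by (simp only: prod_list_map_const_mult len)
  also have "y\<^sup>2 - 1 = c\<^sup>2 * (x\<^sup>2 - 1 / c\<^sup>2)"
    unfolding y_def using c by (simp add: field_simps power2_eq_square)
  finally have "poly (char_poly (arc_matrix V E (nb_trans V E))) x
      = ((1 / c) ^ nA * (c\<^sup>2) ^ (nE - nV) * (c\<^sup>2) ^ nV)
        * ((x\<^sup>2 - 1 / c\<^sup>2) ^ (nE - nV) * (\<Prod>a\<leftarrow>es. x\<^sup>2 - (a / c) * x + 1 / c))"
    by (simp only: power_mult_distrib mult_ac)
  also have "(1 / c) ^ nA * (c\<^sup>2) ^ (nE - nV) * (c\<^sup>2) ^ nV = 1"
  proof -
    have "2 * (nE - nV) + 2 * nV = nA" using nV_le_nE[OF assms(1)] nA_eq_twice_nE by simp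
    then show ?thesis using c by (simp add: power_one_over mult.assoc flip: power_add power_mult)
  qed
  finally show "poly (char_poly (arc_matrix V E (nb_trans V E))) x
    = poly ([:- (1 / c\<^sup>2), 0, 1:] ^ (nE - nV) * (\<Prod>a\<leftarrow>es. [:1 / c, - (a / c), 1:])) x"
    by (simp add: poly_prod_list o_def power2_eq_square algebra_simps)
qed simp

section \<open>The spectrum of the adjacency matrix\<close>

definition "adj_weight i j = (if i < nV \<and> j < nV \<and> E (vs ! i) (vs ! j) then 1 else 0 :: real)"

lemma adj_weight_sym: "adj_weight i j = adj_weight j i"
  unfolding adj_weight_def using adj_sym by auto

lemma adj_weight_nonneg: "adj_weight i j \<ge> 0"
  unfolding adj_weight_def by auto

lemma adjacency_mat_entry: "i < nV \<Longrightarrow> j < nV \<Longrightarrow> adjacency_mat $$ (i, j) = of_real (adj_weight i j)"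
  by (simp add: adjacency_mat_def adj_weight_def)

lemma adj_weight_row_sum: "i < nV \<Longrightarrow> (\<Sum>j<nV. adj_weight i j) = d"
proof -
  assume i: "i < nV"
  have "(\<Sum>j<nV. adj_weight i j) = (\<Sum>j=0..<nV. (\<lambda>x. if E (vs ! i) x then 1 else 0 :: real) (vs ! j))"
    unfolding lessThan_atLeast0 adj_weight_def using i by (intro sum.cong) auto
  also have "\<dots> = (\<Sum>x\<in>V. if E (vs ! i) x then 1 else 0)" by (rule sum_vertices)
  also have "\<dots> = real (card {x\<in>V. E (vs ! i) x})" using finite_V by (simp add: sum.If_cases Int_def)
  finally show ?thesis using card_neighbours nth_vs_in_V[OF i] by simp
qed

lemma root_char_poly_adjacency:
  assumes "poly (char_poly adjacency_mat) \<mu> = 0"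
  shows "Im \<mu> = 0" and "\<bar>Re \<mu>\<bar> \<le> d"
  using eigenvalue_real_bounded_by_row_sum[OF carriers(1) adjacency_mat_entry adj_weight_sym
      adj_weight_nonneg _ assms, of "real d"] adj_weight_row_sum
  by auto

lemma trace_adjacency_mat: "trace_mat adjacency_mat = 0"
  unfolding trace_mat_def by (rule sum.neutral) (auto simp: adjacency_mat_def adj_irrefl)

lemma trace_adjacency_mat_square: "trace_mat (adjacency_mat ^\<^sub>m 2) = of_nat (nV * d)"
proof -
  have "(adjacency_mat * adjacency_mat) $$ (i, i) = of_nat d" if i: "i < nV" for i
  proof -
    have "(adjacency_mat * adjacency_mat) $$ (i, i)
        = (\<Sum>j\<in>{0..<nV}. adjacency_mat $$ (i, j) * adjacency_mat $$ (j, i))"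
      using i by (simp add: scalar_prod_def)
    also have "\<dots> = of_real (\<Sum>j<nV. adj_weight i j)"
      unfolding lessThan_atLeast0 of_real_sum
      by (intro sum.cong)
        (auto simp: adjacency_mat_entry i adj_weight_sym, auto simp: adj_weight_def)
    finally show ?thesis using adj_weight_row_sum[OF i] by simp
  qed
  then show ?thesis by (simp add: numeral_2_eq_2 trace_mat_def)
qed

lemma trace_adjacency_mat_cube_pos:
  assumes "E u v" "E v w" "E w u"
  shows "1 \<le> Re (trace_mat (adjacency_mat ^\<^sub>m 3))"
proof -
  define a where "a i j = (if E (vs ! i) (vs ! j) then 1 else 0 :: nat)" for i j
  have entry: "i < nV \<Longrightarrow> j < nV \<Longrightarrow> adjacency_mat $$ (i, j) = of_nat (a i j)" for i j
    by (simp add: adjacency_mat_def a_def)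
  define t where "t = (\<Sum>i<nV. \<Sum>j<nV. (\<Sum>k<nV. a i k * a k j) * a j i)"
  have cube: "adjacency_mat ^\<^sub>m 3 = adjacency_mat * adjacency_mat * adjacency_mat"
    by (simp add: numeral_3_eq_3)
  have diag: "(adjacency_mat * adjacency_mat * adjacency_mat) $$ (i, i)
      = of_nat (\<Sum>j<nV. (\<Sum>k<nV. a i k * a k j) * a j i)" if i: "i < nV" for i
  proof -
    have "(adjacency_mat * adjacency_mat * adjacency_mat) $$ (i, i)
        = (\<Sum>j\<in>{0..<nV}. (\<Sum>k\<in>{0..<nV}. adjacency_mat $$ (i, k) * adjacency_mat $$ (k, j)) * adjacency_mat $$ (j, i))"
      using i by (simp add: scalar_prod_def)
    also have "\<dots> = (\<Sum>j<nV. of_nat ((\<Sum>k<nV. a i k * a k j) * a j i))"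
      unfolding lessThan_atLeast0 by (rule sum.cong) (auto simp: entry i of_nat_sum intro!: sum.cong)
    finally show ?thesis by (simp only: of_nat_sum)
  qed
  have "trace_mat (adjacency_mat ^\<^sub>m 3)
      = (\<Sum>i<nV. (adjacency_mat * adjacency_mat * adjacency_mat) $$ (i, i))"
    by (simp only: cube trace_mat_def dims index_mult_mat(2))
  also have "\<dots> = (\<Sum>i<nV. of_nat (\<Sum>j<nV. (\<Sum>k<nV. a i k * a k j) * a j i))"
    by (rule sum.cong[OF refl], rule diag) simp
  also have "\<dots> = of_nat t"
    unfolding t_def by (simp only: of_nat_sum)
  finally have "trace_mat (adjacency_mat ^\<^sub>m 3) = of_nat t" .
  obtain iu iv iw where idx: "iu < nV" "vs ! iu = u" "iv < nV" "vs ! iv = v" "iw < nV" "vs ! iw = w"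
    using assms adj_in_V vs by (metis in_set_conv_nth)
  then have "1 = a iu iv * a iv iw * a iw iu"
    using assms unfolding a_def by simp
  also have "\<dots> \<le> (\<Sum>k<nV. a iu k * a k iw) * a iw iu"
    using idx by (intro mult_right_mono member_le_sum) auto
  also have "\<dots> \<le> (\<Sum>j<nV. (\<Sum>k<nV. a iu k * a k j) * a j iu)"
    using idx by (intro member_le_sum) auto
  also have "\<dots> \<le> t"
    unfolding t_def using idx by (intro member_le_sum) auto
  finally show ?thesis using \<open>trace_mat (adjacency_mat ^\<^sub>m 3) = of_nat t\<close> by simp
qed

lemma adjacency_power_sums:
  assumes sp: "char_poly adjacency_mat = (\<Prod>a\<leftarrow>of_nat d # map of_real xs. [:- a, 1:])"
  shows "sum_list xs = - real d"
    and "(\<Sum>x\<leftarrow>xs. x\<^sup>2) = real (nV * d) - (real d)\<^sup>2"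
    and "(\<Sum>x\<leftarrow>xs. x ^ 3) = Re (trace_mat (adjacency_mat ^\<^sub>m 3)) - (real d) ^ 3"
proof -
  have sums: "trace_mat (adjacency_mat ^\<^sub>m k) = of_nat d ^ k + of_real (\<Sum>x\<leftarrow>xs. x ^ k)" for k
  proof -
    have "(\<Sum>x\<leftarrow>xs. complex_of_real x ^ k) = of_real (\<Sum>x\<leftarrow>xs. x ^ k)"
      by (induction xs) auto
    then show ?thesis using trace_pow_mat_eq_power_sum[OF carriers(1) sp, of k] by (simp add: o_def)
  qed
  have "adjacency_mat ^\<^sub>m 1 = adjacency_mat" by (simp add: One_nat_def)
  then have "of_nat d + of_real (sum_list xs) = (0 :: complex)"
    using sums[of 1] trace_adjacency_mat by simp
  then show "sum_list xs = - real d"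
    by (metis add_eq_0_iff of_real_eq_iff of_real_minus of_real_of_nat_eq add.commute)
  have "(of_nat d)\<^sup>2 + of_real (\<Sum>x\<leftarrow>xs. x\<^sup>2) = (of_nat (nV * d) :: complex)"
    using sums[of 2] trace_adjacency_mat_square by simp
  from arg_cong[OF this, of Re] show "(\<Sum>x\<leftarrow>xs. x\<^sup>2) = real (nV * d) - (real d)\<^sup>2" by simp
  from arg_cong[OF sums[of 3], of Re]
  show "(\<Sum>x\<leftarrow>xs. x ^ 3) = Re (trace_mat (adjacency_mat ^\<^sub>m 3)) - (real d) ^ 3" by simp
qed

section \<open>Kemeny's constants of the two walks\<close>

lemma proots_edge_walk_minus_one:
  assumes "1 \<le> d" and sp: "char_poly adjacency_mat = (\<Prod>a\<leftarrow>of_nat d # map of_real xs. [:- a, 1:])"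
  shows "proots (char_poly (arc_matrix V E (edge_trans V E))) - {#1#}
    = replicate_mset (nA - nV) 0 + mset (map (\<lambda>x. of_real x / of_nat d) xs)"
proof -
  define es where "es = of_nat d # map complex_of_real xs"
  have "proots (\<Prod>a\<leftarrow>es. [:- (a / of_nat d), 1:]) = mset (map (\<lambda>a. a / of_nat d) es)"
    using proots_linear_factors[of "map (\<lambda>a. a / of_nat d) es"] by (simp add: o_def)
  then have "proots (char_poly (arc_matrix V E (edge_trans V E)))
      = replicate_mset (nA - nV) 0 + mset (map (\<lambda>a. a / of_nat d) es)"
    unfolding char_poly_edge_walk[OF assms(1) sp[folded es_def]]
    by (subst proots_mult) (auto simp: proots_power prod_list_zero_iff)
  also have "mset (map (\<lambda>a. a / of_nat d) es)
      = add_mset 1 (mset (map (\<lambda>x. of_real x / of_nat d) xs))"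
    unfolding es_def using assms(1) by (simp add: o_def)
  finally show ?thesis by simp
qed

lemma K_e_eq:
  assumes "1 \<le> d" and sp: "char_poly adjacency_mat = (\<Prod>a\<leftarrow>of_nat d # map of_real xs. [:- a, 1:])"
  shows "K_e V E = of_real (real nV * (real d - 1) + (\<Sum>x\<leftarrow>xs. real d / (real d - x)))"
proof -
  have entry: "1 / (1 - complex_of_real x / of_nat d) = of_nat d / (of_nat d - of_real x)" for x
    using assms(1) by (cases "x = real d") (simp_all add: field_simps)
  have "real (nA - nV) = real nV * (real d - 1)"
    using nA_eq assms(1) by (simp add: of_nat_diff algebra_simps)
  then have "of_nat (nA - nV) = (of_real (real nV * (real d - 1)) :: complex)"
    by (metis of_real_of_nat_eq)
  then show ?thesis
    unfolding K_e_def kemeny_def proots_edge_walk_minus_one[OF assms]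
    by (simp add: sum_mset_image_mset_mset entry flip: sum_list_of_real_map)
qed

lemma proots_nb_walk_minus_one:
  assumes "2 \<le> d" and sp: "char_poly adjacency_mat = (\<Prod>a\<leftarrow>of_nat d # map of_real xs. [:- a, 1:])"
  defines "c \<equiv> of_nat d - 1 :: complex"
  shows "proots (char_poly (arc_matrix V E (nb_trans V E))) - {#1#}
    = replicate_mset (nE - nV) (1 / c) + replicate_mset (nE - nV) (- (1 / c))
      + add_mset (1 / c) (\<Sum>x\<leftarrow>xs. proots [:1 / c, - (of_real x / c), 1:])"
proof -
  have c: "c \<noteq> 0" unfolding c_def using assms(1) by simp
  define Q where "Q a = [:1 / c, - (a / c), 1:]" for a
  have "Q a \<noteq> 0" for a unfolding Q_def by simp
  have "[:- (1 / c\<^sup>2), 0, 1:] = [:- (1 / c), 1:] * [:- (- (1 / c)), 1:]"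
    by (simp add: power2_eq_square)
  then have "proots [:- (1 / c\<^sup>2), 0, 1:] = {#1 / c, - (1 / c)#}"
    by (simp only:) (subst proots_mult; simp)
  then have "proots ([:- (1 / c\<^sup>2), 0, 1:] ^ (nE - nV))
      = replicate_mset (nE - nV) (1 / c) + replicate_mset (nE - nV) (- (1 / c))"
    by (simp add: proots_power)
  moreover have "Q (of_nat d) = [:- 1, 1:] * [:- (1 / c), 1:]"
    unfolding Q_def c_def using c[unfolded c_def] by (simp add: field_simps)
  then have "proots (Q (of_nat d)) = {#1, 1 / c#}" by (simp only:) (subst proots_mult; simp)
  moreover have "proots (\<Prod>a\<leftarrow>of_nat d # map of_real xs. Q a)
      = (\<Sum>a\<leftarrow>of_nat d # map of_real xs. proots (Q a))"
  proof -
    have "0 \<notin> set (map Q (of_nat d # map of_real xs))"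
      unfolding set_map using \<open>\<And>a. Q a \<noteq> 0\<close> by (auto dest: sym)
    from proots_prod_list[OF this] show ?thesis by (simp add: o_def)
  qed
  moreover have "char_poly (arc_matrix V E (nb_trans V E))
      = [:- (1 / c\<^sup>2), 0, 1:] ^ (nE - nV) * (\<Prod>a\<leftarrow>of_nat d # map of_real xs. Q a)"
    unfolding char_poly_nb_walk[OF assms(1) sp] c_def Q_def ..
  moreover have "(\<Prod>a\<leftarrow>of_nat d # map of_real xs. Q a) \<noteq> 0"
    using \<open>\<And>a. Q a \<noteq> 0\<close> by (auto simp: prod_list_zero_iff dest: sym)
  ultimately have "proots (char_poly (arc_matrix V E (nb_trans V E)))
      = replicate_mset (nE - nV) (1 / c) + replicate_mset (nE - nV) (- (1 / c))
        + add_mset 1 (add_mset (1 / c) (\<Sum>x\<leftarrow>xs. proots (Q (of_real x))))"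
    by (simp add: proots_mult o_def del: prod_list.Cons)
  then show ?thesis unfolding Q_def by simp
qed

lemma K_nb_eq:
  assumes "3 \<le> d" and sp: "char_poly adjacency_mat = (\<Prod>a\<leftarrow>of_nat d # map of_real xs. [:- a, 1:])"
    and below: "\<And>x. x \<in> set xs \<Longrightarrow> x < d"
  shows "K_nb V E = of_real (real nV * (real d - 1)\<^sup>2 / real d + (real d - 1) / (real d - 2)
    + (\<Sum>x\<leftarrow>xs. (2 * real d - 2 - x) / (real d - x)))"
proof -
  have d2: "2 \<le> d" using assms(1) by simp
  define c where "c = real d - 1"
  have c: "c > 1" unfolding c_def using assms(1) by simp
  have c_eq: "(of_nat d - 1 :: complex) = of_real c" unfolding c_def by simp
  define f where "f \<rho> = 1 / (1 - \<rho>)" for \<rho> :: complex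
  have f_plus: "f (1 / of_real c) = of_real ((real d - 1) / (real d - 2))"
    and f_minus: "f (- (1 / of_real c)) = of_real ((real d - 1) / real d)"
    unfolding f_def c_def using assms(1) by (simp_all add: field_simps)
  have f_quadratic: "(\<Sum>\<rho>\<in>#proots [:1 / of_real c, - (of_real x / of_real c), 1:]. f \<rho>)
      = of_real ((2 * real d - 2 - x) / (real d - x))" if "x \<in> set xs" for x
  proof -
    have C: "complex_of_real c \<noteq> 0" using c by simp
    have "c + 1 - x \<noteq> 0" using below[OF that] unfolding c_def by simp
    then have nonzero: "complex_of_real (c + 1 - x) \<noteq> 0" unfolding of_real_eq_0_iff .
    have denom: "1 + - (of_real x / of_real c) + 1 / of_real c
        = complex_of_real (c + 1 - x) / of_real c"
      using C by (simp add: field_simps)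
    have "(\<Sum>\<rho>\<in>#proots [:1 / of_real c, - (of_real x / of_real c), 1:]. f \<rho>)
        = (2 + - (of_real x / of_real c)) / (complex_of_real (c + 1 - x) / of_real c)"
      unfolding f_def denom[symmetric]
    proof (rule sum_proots_quadratic_inverse_one_minus)
      show "1 + - (of_real x / of_real c) + 1 / of_real c \<noteq> (0 :: complex)"
        unfolding denom divide_eq_0_iff using C nonzero by blast
    qed
    also have "\<dots> = (2 * of_real c - of_real x) / complex_of_real (c + 1 - x)"
      using C by (simp add: divide_simps)
    also have "\<dots> = complex_of_real ((2 * c - x) / (c + 1 - x))"
      by simp
    finally show ?thesis unfolding c_def by (simp add: algebra_simps)
  qed
  have "real (nE - nV) = real nV * (real d - 2) / 2"
    using nA_eq_twice_nE nA_eq nV_le_nE assms(1)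
    by (simp add: of_nat_diff field_simps flip: of_nat_mult)
  then have edges: "of_nat (nE - nV) = complex_of_real (real nV * (real d - 2) / 2)"
    by (metis of_real_of_nat_eq)
  have quadratics: "(\<Sum>x\<leftarrow>xs. \<Sum>\<rho>\<in>#proots [:1 / of_real c, - (of_real x / of_real c), 1:]. f \<rho>)
      = of_real (\<Sum>x\<leftarrow>xs. (2 * real d - 2 - x) / (real d - x))"
    by (simp add: f_quadratic sum_list_of_real_map[symmetric] cong: map_cong)
  have "K_nb V E
      = of_nat (nE - nV) * (f (1 / of_real c) + f (- (1 / of_real c))) + f (1 / of_real c)
      + (\<Sum>x\<leftarrow>xs. \<Sum>\<rho>\<in>#proots [:1 / of_real c, - (of_real x / of_real c), 1:]. f \<rho>)"
    unfolding K_nb_def kemeny_def proots_nb_walk_minus_one[OF d2 sp] c_eq f_def[symmetric]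
    by (simp add: sum_mset_sum_list_msets algebra_simps)
  also have "\<dots> = of_real (real nV * (real d - 2) / 2 * ((real d - 1) / (real d - 2) + (real d - 1) / real d)
      + (real d - 1) / (real d - 2) + (\<Sum>x\<leftarrow>xs. (2 * real d - 2 - x) / (real d - x)))"
    unfolding edges f_plus f_minus quadratics by (simp only: of_real_add of_real_mult)
  also have "real nV * (real d - 2) / 2 * ((real d - 1) / (real d - 2) + (real d - 1) / real d)
      = real nV * (real d - 1)\<^sup>2 / real d"
    using assms(1) by (simp add: field_simps power2_eq_square)
  finally show ?thesis .
qed

section \<open>The exceptional graphs\<close>

lemma complete_graph_iso:
  assumes "nV = d + 1"
  shows "graph_iso V E (complete_V nV) (complete_E nV)"
proof -
  have adj: "E u w" if u: "u \<in> V" and w: "w \<in> V" and "u \<noteq> w" for u w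
  proof -
    have "{x\<in>V. E u x} \<subseteq> V - {u}" using adj_irrefl by auto
    moreover have "card (V - {u}) = d" using u finite_V assms unfolding nV_def by simp
    ultimately have "{x\<in>V. E u x} = V - {u}"
      using card_neighbours[OF u] finite_V by (intro card_subset_eq) auto
    then show ?thesis using w \<open>u \<noteq> w\<close> by auto
  qed
  obtain h where h: "bij_betw h V {0..<nV}"
    using ex_bij_betw_finite_nat[OF finite_V] unfolding nV_def by blast
  have "E u v \<longleftrightarrow> complete_E nV (h u) (h v)" if "u \<in> V" "v \<in> V" for u v
  proof -
    have "h u < nV" "h v < nV" using h that unfolding bij_betw_def by auto
    moreover have "h u = h v \<longleftrightarrow> u = v" using h that unfolding bij_betw_def inj_on_def by blast
    ultimately show ?thesis unfolding complete_E_def using adj that adj_irrefl by auto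
  qed
  then show ?thesis unfolding graph_iso_def complete_V_def using h by auto
qed

text \<open>The neighbourhood N of any vertex is independent, so each of its vertices is adjacent to
  all d vertices outside N, and by counting these have no further neighbours.\<close>

lemma triangle_free_bipartite:
  assumes "nV = 2 * d" "v \<in> V" and triangle_free: "\<not> (\<exists>u v w. E u v \<and> E v w \<and> E w u)"
  defines "N \<equiv> {w \<in> V. E v w}"
  shows "card N = d" and "\<And>u w. u \<in> V \<Longrightarrow> w \<in> V \<Longrightarrow> E u w \<longleftrightarrow> (u \<in> N) \<noteq> (w \<in> N)"
proof -
  show "card N = d" unfolding N_def by (rule card_neighbours[OF assms(2)])
  have "N \<subseteq> V" unfolding N_def by auto
  then have card_rest: "card (V - N) = d"
    using assms(1) \<open>card N = d\<close> finite_V by (simp add: card_Diff_subset finite_subset nV_def)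
  have from_N: "{w\<in>V. E a w} = V - N" if "a \<in> N" for a
  proof (rule card_subset_eq)
    show "{w\<in>V. E a w} \<subseteq> V - N"
      using that triangle_free adj_sym unfolding N_def by blast
    show "card {w\<in>V. E a w} = card (V - N)"
      using card_neighbours that card_rest \<open>N \<subseteq> V\<close> by auto
  qed (use finite_V in auto)
  have from_rest: "{w\<in>V. E x w} = N" if "x \<in> V - N" for x
  proof (rule card_subset_eq[symmetric])
    show "N \<subseteq> {w\<in>V. E x w}"
      using from_N that adj_sym \<open>N \<subseteq> V\<close> by blast
    show "card N = card {w\<in>V. E x w}"
      using card_neighbours that \<open>card N = d\<close> by auto
  qed (use finite_V in auto)
  show "E u w \<longleftrightarrow> (u \<in> N) \<noteq> (w \<in> N)" if "u \<in> V" "w \<in> V" for u w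
    using from_N[of u] from_rest[of u] that by blast
qed

lemma triangle_of_not_K33:
  assumes "d = 3" "nV = 6" "\<not> graph_iso V E K33_V K33_E"
  shows "\<exists>u v w. E u v \<and> E v w \<and> E w u"
proof (rule ccontr)
  assume triangle_free: "\<not> (\<exists>u v w. E u v \<and> E v w \<and> E w u)"
  obtain v where "v \<in> V" using assms(2) unfolding nV_def by fastforce
  note bipartite = triangle_free_bipartite[OF _ this triangle_free]
  have "graph_iso V E K33_V K33_E"
    by (rule graph_iso_K33I[of V "{w \<in> V. E v w}"])
      (use finite_V assms bipartite in \<open>auto simp: nV_def\<close>)
  with assms(3) show False ..
qed

end

locale connected_regular_graph = regular_graph +
  assumes connected: "connected_graph V E" and degree_pos: "0 < d"
begin

lemma degree_less_card: "d + 1 \<le> nV"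
proof -
  obtain v where v: "v \<in> V" using connected unfolding connected_graph_def by auto
  have "{w\<in>V. E v w} \<subseteq> V - {v}" using adj_irrefl by auto
  then have "card {w\<in>V. E v w} \<le> card (V - {v})" using finite_V by (intro card_mono) auto
  moreover have "card (V - {v}) = card V - 1" and "card V \<ge> 1"
    using v finite_V by (auto simp: Suc_le_eq card_gt_0_iff)
  ultimately show ?thesis using card_neighbours[OF v] unfolding nV_def by linarith
qed

lemma root_char_poly_adjacency_degree: "poly (char_poly adjacency_mat) (of_nat d) = 0"
proof -
  define v where "v = vec nV (\<lambda>_. 1 :: complex)"
  have "adjacency_mat *\<^sub>v v = of_nat d \<cdot>\<^sub>v v"
  proof (rule eq_vecI)
    fix i assume "i < dim_vec (of_nat d \<cdot>\<^sub>v v)"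
    then have i: "i < nV" unfolding v_def by simp
    have "(adjacency_mat *\<^sub>v v) $ i = (\<Sum>j\<in>{0..<nV}. adjacency_mat $$ (i, j) * 1)"
      using i unfolding v_def by (simp add: scalar_prod_def)
    also have "\<dots> = complex_of_real (\<Sum>j<nV. adj_weight i j)"
      unfolding lessThan_atLeast0 of_real_sum by (rule sum.cong) (auto simp: adjacency_mat_entry i)
    finally show "(adjacency_mat *\<^sub>v v) $ i = (of_nat d \<cdot>\<^sub>v v) $ i"
      using i adj_weight_row_sum[OF i] unfolding v_def by simp
  qed (simp add: v_def)
  moreover have "v \<noteq> 0\<^sub>v nV"
    unfolding v_def using degree_less_card by (metis index_vec index_zero_vec(1) one_neq_zero add_leE
        less_eq_Suc_le Suc_eq_plus1)
  ultimately have "eigenvector adjacency_mat v (of_nat d)"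
    unfolding eigenvector_def v_def by simp
  then have "eigenvalue adjacency_mat (of_nat d)"
    unfolding eigenvalue_def by blast
  then show ?thesis using eigenvalue_root_char_poly[OF carriers(1)] by simp
qed

definition "erased_weight k i j = (if i \<noteq> k \<and> j \<noteq> k then adj_weight i j else 0)"

lemma erased_weight_sym: "erased_weight k i j = erased_weight k j i"
  unfolding erased_weight_def using adj_weight_sym by auto

lemma erased_weight_nonneg: "erased_weight k i j \<ge> 0"
  unfolding erased_weight_def using adj_weight_nonneg by auto

lemma mat_erase_adjacency_entry:
  "i < nV \<Longrightarrow> j < nV \<Longrightarrow> mat_erase adjacency_mat k k $$ (i, j) = of_real (erased_weight k i j)"
  by (simp add: mat_erase_def adjacency_mat_entry erased_weight_def)

lemma erased_weight_row_sum_le: "i < nV \<Longrightarrow> (\<Sum>j<nV. erased_weight k i j) \<le> d"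
  using sum_mono[of "{..<nV}" "erased_weight k i" "adj_weight i"] adj_weight_row_sum[of i]
  by (auto simp: erased_weight_def adj_weight_nonneg)

lemma erased_weight_row_sum_neighbour:
  assumes "i < nV" "k < nV" "E (vs ! i) (vs ! k)"
  shows "(\<Sum>j<nV. erased_weight k i j) = real d - 1"
proof -
  have "i \<noteq> k" using assms(3) adj_irrefl by auto
  then have "(\<Sum>j<nV. erased_weight k i j) = (\<Sum>j<nV. adj_weight i j - (if j = k then 1 else 0))"
    using assms by (intro sum.cong) (auto simp: erased_weight_def adj_weight_def)
  then show ?thesis using assms(2) by (simp add: sum_subtractf adj_weight_row_sum[OF assms(1)])
qed

text \<open>An eigenfunction for the eigenvalue d of the adjacency matrix with vertex k deleted
  vanishes at k and its neighbours and is constant along all other edges; connectivity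
  then spreads the zero to every vertex.\<close>

lemma degree_not_root_char_poly_erase:
  assumes k: "k < nV"
  shows "poly (char_poly (mat_erase adjacency_mat k k)) (of_nat d) \<noteq> 0"
proof
  assume root: "poly (char_poly (mat_erase adjacency_mat k k)) (of_nat d) = 0"
  have X: "mat_erase adjacency_mat k k \<in> carrier_mat nV nV" by simp
  obtain f where ev: "\<And>i. i < nV \<Longrightarrow> (\<Sum>j<nV. of_real (erased_weight k i j) * f j) = of_nat d * f i"
    and pos: "(\<Sum>i<nV. (cmod (f i))\<^sup>2) > 0"
    using root_char_poly_real_weights_eigenfunction[OF X mat_erase_adjacency_entry root] by blast
  have ev': "(\<Sum>j<nV. of_real (erased_weight k i j) * f j)
      = of_real (real d) * f i" if "i < nV" for i
    using ev[OF that] by simp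
  note top = symmetric_eigenfunction_top_row_sum[where w = "erased_weight k" and n = nV and D = "real d"]
  have top1: "erased_weight k i j * (cmod (f i - f j))\<^sup>2 = 0" if "i < nV" "j < nV" for i j
    using top(1)[OF erased_weight_sym erased_weight_nonneg erased_weight_row_sum_le ev'] that by blast
  have top2: "(real d - (\<Sum>j<nV. erased_weight k i j)) * (cmod (f i))\<^sup>2 = 0" if "i < nV" for i
    using top(2)[OF erased_weight_sym erased_weight_nonneg erased_weight_row_sum_le ev'] that by blast
  have zero_at_k: "f k = 0"
    using top2[OF k] degree_pos by (simp add: erased_weight_def)
  have zero_at_neighbour: "f i = 0" if "i < nV" "E (vs ! i) (vs ! k)" for i
    using top2[OF that(1)] erased_weight_row_sum_neighbour[OF that(1) k that(2)] by simp
  have equal_along_edge: "f i = f j" if "i < nV" "j < nV" "i \<noteq> k" "j \<noteq> k" "E (vs ! i) (vs ! j)" for i j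
    using top1[OF that(1,2)] that by (simp add: erased_weight_def adj_weight_def)
  have "f i = 0" if "E\<^sup>*\<^sup>* x (vs ! k)" "i < nV" "vs ! i = x" for x i
    using that
  proof (induction arbitrary: i rule: converse_rtranclp_induct)
    case base
    then show ?case using zero_at_k k nth_vs_eq_iff by auto
  next
    case (step x z)
    obtain j where j: "j < nV" "vs ! j = z"
      using step.hyps(1) adj_in_V vs by (metis in_set_conv_nth)
    show ?case
    proof (cases "i = k \<or> z = vs ! k")
      case True
      then show ?thesis using zero_at_k zero_at_neighbour step by auto
    next
      case False
      then have "j \<noteq> k" using j by auto
      then show ?thesis using False equal_along_edge[of i j] step j by auto
    qed
  qed
  then have "f i = 0" if "i < nV" for i
    using that k connected nth_vs_in_V unfolding connected_graph_def by blast
  then show False using pos by simp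
qed

lemma poly_char_poly_erase_degree_pos:
  assumes k: "k < nV"
  shows "\<exists>r>0. poly (char_poly (mat_erase adjacency_mat k k)) (of_nat d) = complex_of_real r"
proof -
  have X: "mat_erase adjacency_mat k k \<in> carrier_mat nV nV" by simp
  obtain ms where ms: "char_poly (mat_erase adjacency_mat k k) = (\<Prod>a\<leftarrow>ms. [:- a, 1:])"
    using char_poly_factorized[OF X] by blast
  have "Im \<mu> = 0 \<and> Re \<mu> < real d" if "\<mu> \<in> set ms" for \<mu>
  proof -
    have root: "poly (char_poly (mat_erase adjacency_mat k k)) \<mu> = 0"
      unfolding ms poly_prod_list using that by (auto simp: prod_list_zero_iff)
    have "Im \<mu> = 0" "\<bar>Re \<mu>\<bar> \<le> real d"
      using eigenvalue_real_bounded_by_row_sum[OF X mat_erase_adjacency_entry erased_weight_sym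
          erased_weight_nonneg erased_weight_row_sum_le root] by auto
    moreover have "\<mu> \<noteq> of_nat d" using degree_not_root_char_poly_erase[OF k] root by auto
    ultimately show ?thesis by (auto simp: complex_eq_iff)
  qed
  then show ?thesis
    using prod_list_diff_real_pos[of ms "real d"] unfolding ms by (simp add: poly_prod_list o_def)
qed

text \<open>The derivative of the characteristic polynomial is the sum of the characteristic
  polynomials of the principal minors, each of which is positive at d.\<close>

lemma order_degree_char_poly_adjacency: "Polynomial.order (of_nat d) (char_poly adjacency_mat) = 1"
proof -
  have nonzero: "char_poly adjacency_mat \<noteq> 0"
    using degree_monic_char_poly[OF carriers(1)] by auto
  obtain r where r: "\<And>k. k < nV \<Longrightarrow> r k > 0
      \<and> poly (char_poly (mat_erase adjacency_mat k k)) (of_nat d) = complex_of_real (r k)"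
    using poly_char_poly_erase_degree_pos by metis
  have pos: "(\<Sum>k<nV. r k) > 0"
    using r degree_less_card by (intro sum_pos) (auto simp: lessThan_empty_iff)
  have "of_nat d * poly (pderiv (char_poly adjacency_mat)) (of_nat d)
      = (\<Sum>k<nV. poly (char_poly (mat_erase adjacency_mat k k)) (of_nat d))"
    using arg_cong[OF pderiv_char_poly_mat_erase[OF carriers(1)], of "\<lambda>p. poly p (of_nat d)"]
    by (simp add: poly_sum poly_monom)
  also have "\<dots> = complex_of_real (\<Sum>k<nV. r k)"
    unfolding of_real_sum using r by (intro sum.cong) auto
  finally have "of_nat d * poly (pderiv (char_poly adjacency_mat)) (of_nat d)
      = complex_of_real (\<Sum>k<nV. r k)" .
  moreover have "complex_of_real (\<Sum>k<nV. r k) \<noteq> 0"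
    using pos by (simp only: of_real_eq_0_iff)
  ultimately have "poly (pderiv (char_poly adjacency_mat)) (of_nat d) \<noteq> 0"
    by (metis mult_zero_right)
  then have "Polynomial.order (of_nat d) (pderiv (char_poly adjacency_mat)) = 0"
    using order_root by blast
  then show ?thesis
    using order_pderiv[OF nonzero root_char_poly_adjacency_degree] by simp
qed

lemma adjacency_spectrum:
  obtains xs :: "real list" where
    "char_poly adjacency_mat = (\<Prod>a\<leftarrow>of_nat d # map of_real xs. [:- a, 1:])"
    "length xs = nV - 1" "\<And>x. x \<in> set xs \<Longrightarrow> x < d"
proof -
  obtain es where es: "char_poly adjacency_mat = (\<Prod>a\<leftarrow>es. [:- a, 1:])" "length es = nV"
    using char_poly_factorized[OF carriers(1)] by blast
  have "char_poly adjacency_mat \<noteq> 0"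
    using degree_monic_char_poly[OF carriers(1)] by auto
  then have "count (proots (char_poly adjacency_mat)) (of_nat d) = 1"
    using order_degree_char_poly_adjacency by simp
  then have count: "count (mset es) (of_nat d) = 1"
    unfolding es(1) proots_linear_factors .
  define rl where "rl = remove1 (of_nat d) es"
  have "of_nat d \<in> set es"
  proof (rule ccontr)
    assume "of_nat d \<notin> set es"
    then have "count (mset es) (of_nat d) = 0" by (simp add: count_mset_0_iff)
    with count show False by simp
  qed
  then have mset_es: "mset es = mset (of_nat d # rl)" unfolding rl_def by simp
  have "count (mset rl) (of_nat d) = 0" using count mset_es by simp
  then have "of_nat d \<notin> set rl" by (simp add: count_mset_0_iff)
  have real: "Im a = 0" and below: "Re a < d" if "a \<in> set rl" for a
  proof -
    have "a \<in> set es" using that mset_eq_setD[OF mset_es] by simp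
    then have "poly (char_poly adjacency_mat) a = 0"
      unfolding es(1) poly_prod_list by (auto simp: prod_list_zero_iff)
    note root_char_poly_adjacency[OF this]
    moreover have "a \<noteq> of_nat d" using that \<open>of_nat d \<notin> set rl\<close> by auto
    ultimately show "Im a = 0" "Re a < d" by (auto simp: complex_eq_iff)
  qed
  have real_rl: "map of_real (map Re rl) = rl"
    unfolding map_map by (rule map_idI) (simp add: real complex_eq_iff)
  show ?thesis
  proof (rule that[of "map Re rl"])
    show "char_poly adjacency_mat = (\<Prod>a\<leftarrow>of_nat d # map of_real (map Re rl). [:- a, 1:])"
      unfolding real_rl using prod_list_map_mset_cong[OF mset_es, of "\<lambda>a. [:- a, 1:]"] es(1) by simp
    show "length (map Re rl) = nV - 1"
      using es(2) \<open>of_nat d \<in> set es\<close> by (simp add: rl_def length_remove1)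
  qed (use below in auto)
qed

theorem K_nb_less_K_e:
  assumes "3 \<le> d"
    and "\<not> graph_iso V E (complete_V 4) (complete_E 4)"
    and "\<not> graph_iso V E (complete_V 5) (complete_E 5)"
    and "\<not> graph_iso V E K33_V K33_E"
  shows "Im (K_e V E) = 0 \<and> Im (K_nb V E) = 0 \<and> Re (K_nb V E) < Re (K_e V E)"
proof -
  obtain xs where sp: "char_poly adjacency_mat = (\<Prod>a\<leftarrow>of_nat d # map of_real xs. [:- a, 1:])"
    and len: "length xs = nV - 1" and below: "\<And>x. x \<in> set xs \<Longrightarrow> x < d"
    using adjacency_spectrum by blast
  note sums = adjacency_power_sums[OF sp]
  have "real nV / real d + 1 / (real d - 2) < 2 * (\<Sum>x\<leftarrow>xs. 1 / (real d - x))"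
  proof (rule two_sum_inverse_diff_gt[OF assms(1) degree_less_card len _ below sums(1)])
    show "even (nV * d)" using nA_eq nA_eq_twice_nE by (metis dvd_triv_left)
    show "\<not> (d = 3 \<and> nV = 4)" "\<not> (d = 4 \<and> nV = 5)"
      using complete_graph_iso assms(2,3) by auto
    assume "d = 3" "nV = 6"
    then have "1 \<le> Re (trace_mat (adjacency_mat ^\<^sub>m 3))"
      using triangle_of_not_K33 assms(4) trace_adjacency_mat_cube_pos by blast
    then show "(\<Sum>x\<leftarrow>xs. x\<^sup>2) = 9 \<and> - 26 \<le> (\<Sum>x\<leftarrow>xs. x ^ 3)"
      using sums \<open>d = 3\<close> \<open>nV = 6\<close> by simp
  qed
  moreover have "length xs + 1 = nV" using len degree_less_card by simp
  note gap = kemeny_gap_eq[OF this assms(1) below]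
  define Ke Knb where "Ke = real nV * (real d - 1) + (\<Sum>x\<leftarrow>xs. real d / (real d - x))"
    and "Knb = real nV * (real d - 1)\<^sup>2 / real d + (real d - 1) / (real d - 2)
      + (\<Sum>x\<leftarrow>xs. (2 * real d - 2 - x) / (real d - x))"
  have "K_e V E = of_real Ke" unfolding Ke_def using assms(1) by (intro K_e_eq sp) simp
  moreover have "K_nb V E = of_real Knb" unfolding Knb_def by (rule K_nb_eq[OF assms(1) sp below])
  ultimately show ?thesis using gap unfolding Ke_def[symmetric] Knb_def[symmetric] by simp
qed

end

theorem theorem3p3:
  fixes V :: "'a::linorder set" and E :: "'a \<Rightarrow> 'a \<Rightarrow> bool" and d :: nat
  assumes "simple_graph V E" and "connected_graph V E" and "regular V E d" and "d \<ge> 3"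
    and "\<not> graph_iso V E (complete_V 4) (complete_E 4)"
    and "\<not> graph_iso V E (complete_V 5) (complete_E 5)"
    and "\<not> graph_iso V E K33_V K33_E"
  shows "Im (K_e V E) = 0 \<and> Im (K_nb V E) = 0 \<and> Re (K_e V E) > Re (K_nb V E)"
proof -
  interpret connected_regular_graph V E d
    using assms(1-4) by unfold_locales auto
  show ?thesis using K_nb_less_K_e assms(4-7) by blast
qed

end
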